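(* Let $G$ be a compact Hausdorff group and $\hat G$ a complete set of pairwise non-isomorphic irreducible unitary representations of $G$. Fix data $y^{(1)},\ldots,y^{(n)}\in L^2(G)$ (real-valued), $q\ge1$, $\lambda\ge0$ and real constants $\mu_1,\ldots,\mu_q$. For any subset $\hat H\subseteq\hat G$, $\mathrm{OPT}\text{-}\hat H\le\mathrm{OPT}\text{-}\hat G$.
   Context: $\mu$ is normalized Haar measure; each $\xi\in\hat G$ is $\rho_\xi:G\to U(V_\xi)$, $d_\xi=\dim V_\xi<\infty$. Fourier coefficients $\hat f_\xi=\int_G f(g)\rho_\xi(g)^*d\mu(g)$. For $\hat H\subseteq\hat G$, $L^2(\hat H)$ = functions $f\in L^2(G)$ with $\hat f_\xi=0$ for $\xi\notin\hat H$; $B(L^2(\hat H))$ = block-diagonal operators $\ell=(\ell_\xi)_{\xi\in\hat H}$, $\ell_\xi\in\mathbb{C}^{d_\xi\times d_\xi}$, acting by $\hat f_\xi\mapsto\hat f_\xi\ell_\xi^*$. Atomic norm $\|z\|_{\hat G}=\inf\{s\ge0:z\in s\cdot\mathrm{cl}\,\mathrm{conv}\{\pm(\rho_\xi(g))_{\xi\in\hat G}:g\in G\}\}$; $P_{\hat H}(z)=(z_\xi)_{\xi\in\hat H}$; $\|t\|^+_{\hat H}=\inf\{\|z\|_{\hat G}:z\in B(L^2(\hat G)),P_{\hat H}(z)=t\}$. $\mathrm{OPT}\text{-}\hat H$ is the infimum, over $\hat\phi_1,\ldots,\hat\phi_q\in L^2(\hat H)$ and $\ell^{(i)}_j\in B(L^2(\hat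 H))$ ($1\le i\le n$, $1\le j\le q$), of $\sum_{i=1}^n\big(\sum_{\xi\in\hat H}\frac{d_\xi^2}{2}\|\hat y^{(i)}_\xi-\sum_{j=1}^q\hat\phi_{j,\xi}(\ell^{(i)}_{j,\xi})^*\|_F^2+\lambda\sum_{j=1}^q\|\ell^{(i)}_j\|^+_{\hat H}\big)+\sum_{j=1}^q\mu_j\sum_{\xi\in\hat H}d_\xi^2\|\hat\phi_{j,\xi}\|_F^2$. *)

theory Defs
  imports "HOL-Algebra.Group" "HOL-Probability.Probability" "Jordan_Normal_Form.Schur_Decomposition"
begin

definition compact_Hausdorff_group :: "'g monoid \<Rightarrow> 'g topology \<Rightarrow> bool" where
  "compact_Hausdorff_group G T \<longleftrightarrow>
     group G \<and> topspace T = carrier G \<and> compact_space T \<and> Hausdorff_space T \<and>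
     continuous_map (prod_topology T T) T (\<lambda>(x, y). x \<otimes>\<^bsub>G\<^esub> y) \<and>
     continuous_map T T (\<lambda>x. inv\<^bsub>G\<^esub> x)"

definition normalized_Haar :: "'g monoid \<Rightarrow> 'g topology \<Rightarrow> 'g measure \<Rightarrow> bool" where
  "normalized_Haar G T M \<longleftrightarrow>
     space M = carrier G \<and>
     sets M = sigma_sets (carrier G) {U. openin T U} \<and>
     prob_space M \<and>
     (\<forall>g\<in>carrier G. \<forall>A\<in>sets M.
        (\<lambda>x. g \<otimes>\<^bsub>G\<^esub> x) ` A \<in> sets M \<and>
        emeasure M ((\<lambda>x. g \<otimes>\<^bsub>G\<^esub> x) ` A) = emeasure M A) \<and>
     (\<forall>A\<in>sets M. emeasure M A = (INF U\<in>{U. openin T U \<and> A \<subseteq> U}. emeasure M U)) \<and>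
     (\<forall>U. openin T U \<longrightarrow> emeasure M U = (SUP K\<in>{K. compactin T K \<and> K \<subseteq> U}. emeasure M K))"

definition unitary_rep :: "'g monoid \<Rightarrow> 'g topology \<Rightarrow> nat \<Rightarrow> ('g \<Rightarrow> complex mat) \<Rightarrow> bool" where
  "unitary_rep G T d \<rho> \<longleftrightarrow>
     (\<forall>g\<in>carrier G. \<rho> g \<in> carrier_mat d d \<and> mat_adjoint (\<rho> g) * \<rho> g = 1\<^sub>m d) \<and>
     (\<forall>g\<in>carrier G. \<forall>h\<in>carrier G. \<rho> (g \<otimes>\<^bsub>G\<^esub> h) = \<rho> g * \<rho> h) \<and>
     (\<forall>a<d. \<forall>b<d. continuous_map T euclidean (\<lambda>g. \<rho> g $$ (a, b)))"

definition cvec_subspace :: "nat \<Rightarrow> complex vec set \<Rightarrow> bool" where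
  "cvec_subspace d W \<longleftrightarrow> W \<subseteq> carrier_vec d \<and> 0\<^sub>v d \<in> W \<and>
     (\<forall>v\<in>W. \<forall>w\<in>W. v + w \<in> W) \<and> (\<forall>c. \<forall>v\<in>W. c \<cdot>\<^sub>v v \<in> W)"

definition irreducible_rep :: "'g monoid \<Rightarrow> nat \<Rightarrow> ('g \<Rightarrow> complex mat) \<Rightarrow> bool" where
  "irreducible_rep G d \<rho> \<longleftrightarrow> d \<ge> 1 \<and>
     (\<forall>W. cvec_subspace d W \<and> (\<forall>g\<in>carrier G. \<forall>v\<in>W. \<rho> g *\<^sub>v v \<in> W)
          \<longrightarrow> W = {0\<^sub>v d} \<or> W = carrier_vec d)"

definition rep_iso :: "'g monoid \<Rightarrow> nat \<Rightarrow> ('g \<Rightarrow> complex mat) \<Rightarrow> nat \<Rightarrow> ('g \<Rightarrow> complex mat) \<Rightarrow> bool" where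
  "rep_iso G d \<rho> d' \<sigma> \<longleftrightarrow> d = d' \<and>
     (\<exists>A\<in>carrier_mat d d. invertible_mat A \<and> (\<forall>g\<in>carrier G. A * \<rho> g = \<sigma> g * A))"

definition complete_dual ::
  "'g monoid \<Rightarrow> 'g topology \<Rightarrow> 'x set \<Rightarrow> ('x \<Rightarrow> nat) \<Rightarrow> ('x \<Rightarrow> 'g \<Rightarrow> complex mat) \<Rightarrow> bool" where
  "complete_dual G T Ghat d \<rho> \<longleftrightarrow>
     (\<forall>\<xi>\<in>Ghat. unitary_rep G T (d \<xi>) (\<rho> \<xi>) \<and> irreducible_rep G (d \<xi>) (\<rho> \<xi>)) \<and>
     (\<forall>\<xi>\<in>Ghat. \<forall>\<xi>'\<in>Ghat. \<xi> \<noteq> \<xi>' \<longrightarrow> \<not> rep_iso G (d \<xi>) (\<rho> \<xi>) (d \<xi>') (\<rho> \<xi>')) \<and>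
     (\<forall>d' \<sigma>. unitary_rep G T d' \<sigma> \<and> irreducible_rep G d' \<sigma> \<longrightarrow>
        (\<exists>\<xi>\<in>Ghat. rep_iso G d' \<sigma> (d \<xi>) (\<rho> \<xi>)))"

definition L2 :: "'g measure \<Rightarrow> ('g \<Rightarrow> complex) \<Rightarrow> bool" where
  "L2 M f \<longleftrightarrow> f \<in> borel_measurable M \<and> integrable M (\<lambda>g. (cmod (f g))\<^sup>2)"

definition fourier :: "'g measure \<Rightarrow> ('x \<Rightarrow> nat) \<Rightarrow> ('x \<Rightarrow> 'g \<Rightarrow> complex mat)
    \<Rightarrow> ('g \<Rightarrow> complex) \<Rightarrow> 'x \<Rightarrow> complex mat" where
  "fourier M d \<rho> f \<xi> = mat (d \<xi>) (d \<xi>)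
     (\<lambda>(a, b). LINT g|M. f g * (mat_adjoint (\<rho> \<xi> g) $$ (a, b)))"

definition L2_hat :: "'g measure \<Rightarrow> 'x set \<Rightarrow> ('x \<Rightarrow> nat) \<Rightarrow> ('x \<Rightarrow> 'g \<Rightarrow> complex mat)
    \<Rightarrow> 'x set \<Rightarrow> ('g \<Rightarrow> complex) \<Rightarrow> bool" where
  "L2_hat M Ghat d \<rho> H f \<longleftrightarrow> L2 M f \<and>
     (\<forall>\<xi>\<in>Ghat - H. fourier M d \<rho> f \<xi> = 0\<^sub>m (d \<xi>) (d \<xi>))"

definition cvnorm :: "complex vec \<Rightarrow> real" where
  "cvnorm v = sqrt (\<Sum>i<dim_vec v. (cmod (v $ i))\<^sup>2)"

definition opnorm_le :: "complex mat \<Rightarrow> real \<Rightarrow> bool" where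
  "opnorm_le A c \<longleftrightarrow> (\<forall>v\<in>carrier_vec (dim_col A). cvnorm (A *\<^sub>v v) \<le> c * cvnorm v)"

text \<open>\<open>\<ell> \<in> B(L^2(\<hat>H))\<close>: a bounded block-diagonal family indexed by \<open>H\<close>
  (values outside \<open>H\<close> are irrelevant).\<close>
definition block_op :: "('x \<Rightarrow> nat) \<Rightarrow> 'x set \<Rightarrow> ('x \<Rightarrow> complex mat) \<Rightarrow> bool" where
  "block_op d H l \<longleftrightarrow> (\<forall>\<xi>\<in>H. l \<xi> \<in> carrier_mat (d \<xi>) (d \<xi>)) \<and>
     (\<exists>C. \<forall>\<xi>\<in>H. opnorm_le (l \<xi>) C)"

definition conv_atoms :: "'g monoid \<Rightarrow> 'x set \<Rightarrow> ('x \<Rightarrow> nat) \<Rightarrow> ('x \<Rightarrow> 'g \<Rightarrow> complex mat)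
    \<Rightarrow> ('x \<Rightarrow> complex mat) set" where
  "conv_atoms G Ghat d \<rho> = {w. \<exists>k (c::nat \<Rightarrow> real) (s::nat \<Rightarrow> real) gs.
      (\<forall>i<k. c i \<ge> 0 \<and> s i \<in> {-1, 1} \<and> gs i \<in> carrier G) \<and> (\<Sum>i<k. c i) = 1 \<and>
      (\<forall>\<xi>\<in>Ghat. w \<xi> = mat (d \<xi>) (d \<xi>)
          (\<lambda>(a, b). \<Sum>i<k. complex_of_real (c i * s i) * (\<rho> \<xi> (gs i) $$ (a, b))))}"

definition cl_conv_atoms :: "'g monoid \<Rightarrow> 'x set \<Rightarrow> ('x \<Rightarrow> nat) \<Rightarrow> ('x \<Rightarrow> 'g \<Rightarrow> complex mat)
    \<Rightarrow> ('x \<Rightarrow> complex mat) set" where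
  "cl_conv_atoms G Ghat d \<rho> = {z. block_op d Ghat z \<and>
      (\<forall>\<epsilon>>0. \<exists>w\<in>conv_atoms G Ghat d \<rho>. \<forall>\<xi>\<in>Ghat. opnorm_le (z \<xi> - w \<xi>) \<epsilon>)}"

text \<open>\<open>\<parallel>z\<parallel>_{\<hat>G}\<close> (value \<open>\<infinity>\<close> if no such \<open>s\<close> exists)\<close>
definition atomic_norm :: "'g monoid \<Rightarrow> 'x set \<Rightarrow> ('x \<Rightarrow> nat) \<Rightarrow> ('x \<Rightarrow> 'g \<Rightarrow> complex mat)
    \<Rightarrow> ('x \<Rightarrow> complex mat) \<Rightarrow> ennreal" where
  "atomic_norm G Ghat d \<rho> z = (INF s\<in>{s::real. s \<ge> 0 \<and>
      (\<exists>w\<in>cl_conv_atoms G Ghat d \<rho>. \<forall>\<xi>\<in>Ghat. z \<xi> = complex_of_real s \<cdot>\<^sub>m w \<xi>)}. ennreal s)"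

definition plus_norm :: "'g monoid \<Rightarrow> 'x set \<Rightarrow> ('x \<Rightarrow> nat) \<Rightarrow> ('x \<Rightarrow> 'g \<Rightarrow> complex mat)
    \<Rightarrow> 'x set \<Rightarrow> ('x \<Rightarrow> complex mat) \<Rightarrow> ennreal" where
  "plus_norm G Ghat d \<rho> H t = (INF z\<in>{z. block_op d Ghat z \<and> (\<forall>\<xi>\<in>H. z \<xi> = t \<xi>)}.
      atomic_norm G Ghat d \<rho> z)"

definition frob2 :: "complex mat \<Rightarrow> real" where
  "frob2 A = (\<Sum>a<dim_row A. \<Sum>b<dim_col A. (cmod (A $$ (a, b)))\<^sup>2)"

definition residual :: "'g measure \<Rightarrow> ('x \<Rightarrow> nat) \<Rightarrow> ('x \<Rightarrow> 'g \<Rightarrow> complex mat)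
    \<Rightarrow> nat \<Rightarrow> ('g \<Rightarrow> real) \<Rightarrow> (nat \<Rightarrow> 'g \<Rightarrow> complex) \<Rightarrow> (nat \<Rightarrow> 'x \<Rightarrow> complex mat)
    \<Rightarrow> 'x \<Rightarrow> complex mat" where
  "residual M d \<rho> q yi \<phi> li \<xi> = mat (d \<xi>) (d \<xi>) (\<lambda>(a, b).
      fourier M d \<rho> (\<lambda>g. complex_of_real (yi g)) \<xi> $$ (a, b)
      - (\<Sum>j<q. (fourier M d \<rho> (\<phi> j) \<xi> * mat_adjoint (li j \<xi>)) $$ (a, b)))"

text \<open>Objective; sums over \<open>\<hat>H\<close> (possibly uncountable) of nonnegative terms are taken
  as sums over the counting measure. Indices: \<open>i < n\<close>, \<open>j < q\<close>.\<close>
definition objective :: "'g monoid \<Rightarrow> 'g measure \<Rightarrow> 'x set \<Rightarrow> ('x \<Rightarrow> nat)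
    \<Rightarrow> ('x \<Rightarrow> 'g \<Rightarrow> complex mat) \<Rightarrow> 'x set \<Rightarrow> nat \<Rightarrow> nat \<Rightarrow> (nat \<Rightarrow> 'g \<Rightarrow> real)
    \<Rightarrow> real \<Rightarrow> (nat \<Rightarrow> real) \<Rightarrow> (nat \<Rightarrow> 'g \<Rightarrow> complex) \<Rightarrow> (nat \<Rightarrow> nat \<Rightarrow> 'x \<Rightarrow> complex mat)
    \<Rightarrow> ennreal" where
  "objective G M Ghat d \<rho> H n q y lam mu \<phi> l =
     (\<Sum>i<n. (\<integral>\<^sup>+ \<xi>. ennreal ((real (d \<xi>))\<^sup>2 / 2 * frob2 (residual M d \<rho> q (y i) \<phi> (l i) \<xi>))
                 \<partial>count_space H)
            + ennreal lam * (\<Sum>j<q. plus_norm G Ghat d \<rho> H (l i j)))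
     + (\<Sum>j<q. ennreal (mu j) *
          (\<integral>\<^sup>+ \<xi>. ennreal ((real (d \<xi>))\<^sup>2 * frob2 (fourier M d \<rho> (\<phi> j) \<xi>)) \<partial>count_space H))"

definition OPT :: "'g monoid \<Rightarrow> 'g measure \<Rightarrow> 'x set \<Rightarrow> ('x \<Rightarrow> nat)
    \<Rightarrow> ('x \<Rightarrow> 'g \<Rightarrow> complex mat) \<Rightarrow> 'x set \<Rightarrow> nat \<Rightarrow> nat \<Rightarrow> (nat \<Rightarrow> 'g \<Rightarrow> real)
    \<Rightarrow> real \<Rightarrow> (nat \<Rightarrow> real) \<Rightarrow> ennreal" where
  "OPT G M Ghat d \<rho> H n q y lam mu =
     (INF (\<phi>, l)\<in>{(\<phi>, l). (\<forall>j<q. L2_hat M Ghat d \<rho> H (\<phi> j)) \<and>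
                         (\<forall>i<n. \<forall>j<q. block_op d H (l i j))}.
        objective G M Ghat d \<rho> H n q y lam mu \<phi> l)"

end

theory Submission
  imports Defs "HOL-Computational_Algebra.Fundamental_Theorem_Algebra"
begin

text \<open>Given a feasible point \<open>(\<phi>, \<ell>)\<close> of OPT-\<open>\<hat>G\<close>, replace each \<open>\<phi>\<^sub>j\<close> by its orthogonal
  projection onto \<open>L\<^sup>2(\<hat>H)\<close>, i.e. the function whose Fourier coefficients agree with those of
  \<open>\<phi>\<^sub>j\<close> on \<open>\<hat>H\<close> and vanish elsewhere, and view \<open>\<ell>\<close> as a family indexed by \<open>\<hat>H\<close>. The
  objective of OPT-\<open>\<hat>H\<close> only sees coefficients indexed by \<open>\<hat>H\<close>, so its sums are sub-sums of
  those of OPT-\<open>\<hat>G\<close>, and \<open>\<parallel>t\<parallel>\<^sup>+\<^sub>\<hat>H \<le> \<parallel>t\<parallel>\<^sup>+\<^sub>\<hat>G\<close> is an infimum under fewer constraints.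

  The projection exists by the Peter-Weyl theory: Schur's lemma gives the orthogonality
  relations for matrix coefficients, hence Bessel's inequality, so \<open>\<phi>\<^sub>j\<close> has only countably
  many non-zero coefficients on \<open>\<hat>H\<close>; the corresponding partial Fourier sums are Cauchy in
  \<open>L\<^sup>2\<close>, and their limit (completeness of \<open>L\<^sup>2\<close>) has the required coefficients.\<close>

lemma mult_cnj_eq_norm_sq: "z * cnj z = (complex_of_real (cmod z))\<^sup>2"
  by (metis complex_norm_square of_real_power)

lemma cnj_mult_eq_norm_sq: "cnj z * z = (complex_of_real (cmod z))\<^sup>2"
  by (metis mult_cnj_eq_norm_sq mult.commute)

lemma mat_adjoint_carrier: "A \<in> carrier_mat n m \<Longrightarrow> mat_adjoint A \<in> carrier_mat m n"
  unfolding mat_adjoint_def by auto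

lemma index_mat_adjoint:
  "A \<in> carrier_mat n m \<Longrightarrow> i < m \<Longrightarrow> j < n \<Longrightarrow> mat_adjoint (A :: complex mat) $$ (i, j) = cnj (A $$ (j, i))"
  unfolding mat_adjoint_def by (auto simp: mat_of_rows_index)

lemma index_mult_mat_sum:
  "A \<in> carrier_mat n k \<Longrightarrow> B \<in> carrier_mat k m \<Longrightarrow> i < n \<Longrightarrow> j < m \<Longrightarrow>
   (A * B) $$ (i, j) = (\<Sum>p<k. A $$ (i, p) * B $$ (p, j))"
  by (auto simp: scalar_prod_def intro!: sum.cong)

lemma mult_mat_vec_unit_vec_index:
  assumes "(A :: complex mat) \<in> carrier_mat n m" "i < n" "j < m"
  shows "(A *\<^sub>v unit_vec m j) $ i = A $$ (i, j)"
proof -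
  have "(A *\<^sub>v unit_vec m j) $ i = (\<Sum>p = 0..<m. A $$ (i, p) * (if p = j then 1 else 0))"
    using assms by (simp add: scalar_prod_def unit_vec_def)
  also have "\<dots> = (\<Sum>p = 0..<m. if p = j then A $$ (i, p) else 0)"
    by (rule sum.cong) auto
  also have "\<dots> = A $$ (i, j)" using assms by simp
  finally show ?thesis .
qed

lemma mat_adjoint_mat_adjoint:
  assumes A: "A \<in> carrier_mat n m"
  shows "mat_adjoint (mat_adjoint (A :: complex mat)) = A"
proof -
  have aA: "mat_adjoint A \<in> carrier_mat m n" by (rule mat_adjoint_carrier[OF A])
  show ?thesis
    by (rule eq_matI) (use A aA mat_adjoint_carrier[OF aA] in \<open>auto simp: index_mat_adjoint[OF aA] index_mat_adjoint[OF A]\<close>)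
qed

lemma mat_adjoint_mult:
  assumes A: "A \<in> carrier_mat n k" and B: "B \<in> carrier_mat k m"
  shows "mat_adjoint ((A :: complex mat) * B) = mat_adjoint B * mat_adjoint A"
proof (rule eq_matI)
  have AB: "A * B \<in> carrier_mat n m" using A B by auto
  have aA: "mat_adjoint A \<in> carrier_mat k n" and aB: "mat_adjoint B \<in> carrier_mat m k"
    using A B by (auto intro: mat_adjoint_carrier)
  show "dim_row (mat_adjoint (A * B)) = dim_row (mat_adjoint B * mat_adjoint A)"
    "dim_col (mat_adjoint (A * B)) = dim_col (mat_adjoint B * mat_adjoint A)"
    using mat_adjoint_carrier[OF AB] aA aB by auto
  fix i j assume "i < dim_row (mat_adjoint B * mat_adjoint A)" "j < dim_col (mat_adjoint B * mat_adjoint A)"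
  then have i: "i < m" and j: "j < n" using aA aB by auto
  have "mat_adjoint (A * B) $$ (i, j) = cnj (\<Sum>p<k. A $$ (j, p) * B $$ (p, i))"
    using index_mat_adjoint[OF AB i j] index_mult_mat_sum[OF A B j i] by simp
  also have "\<dots> = (\<Sum>p<k. mat_adjoint B $$ (i, p) * mat_adjoint A $$ (p, j))"
    using A B i j by (auto simp: index_mat_adjoint mult.commute intro!: sum.cong)
  finally show "mat_adjoint (A * B) $$ (i, j) = (mat_adjoint B * mat_adjoint A) $$ (i, j)"
    using index_mult_mat_sum[OF aB aA i j] by simp
qed

lemma diag_mat_adjoint_mult:
  "X \<in> carrier_mat n m \<Longrightarrow> e < m \<Longrightarrow>
   (mat_adjoint X * X) $$ (e, e) = (\<Sum>a<n. complex_of_real ((cmod (X $$ (a, e)))\<^sup>2))"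
  by (subst index_mult_mat_sum[of _ m n _ m])
     (auto simp: index_mat_adjoint mat_adjoint_carrier cnj_mult_eq_norm_sq intro!: sum.cong)

lemma diag_mult_mat_adjoint:
  "X \<in> carrier_mat n m \<Longrightarrow> a < n \<Longrightarrow>
   (X * mat_adjoint X) $$ (a, a) = (\<Sum>e<m. complex_of_real ((cmod (X $$ (a, e)))\<^sup>2))"
  by (subst index_mult_mat_sum[of _ n m _ n])
     (auto simp: index_mat_adjoint mat_adjoint_carrier mult_cnj_eq_norm_sq intro!: sum.cong)

lemma frob2_carrier: "A \<in> carrier_mat n n \<Longrightarrow> frob2 A = (\<Sum>a<n. \<Sum>b<n. (cmod (A $$ (a, b)))\<^sup>2)"
  unfolding frob2_def by auto

lemma frob2_nonneg: "frob2 A \<ge> 0"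
  unfolding frob2_def by (auto intro!: sum_nonneg)

lemma frob2_eq_0_iff:
  assumes A: "A \<in> carrier_mat n n"
  shows "frob2 A = 0 \<longleftrightarrow> A = 0\<^sub>m n n"
proof
  assume "frob2 A = 0"
  then have "\<forall>a<n. \<forall>b<n. (cmod (A $$ (a, b)))\<^sup>2 = 0"
    unfolding frob2_carrier[OF A] by (simp add: sum_nonneg_eq_0_iff sum_nonneg)
  then show "A = 0\<^sub>m n n" using A by (intro eq_matI) auto
qed (simp add: frob2_def)

lemma sum_cnj_mult_eq_frob2:
  "A \<in> carrier_mat n n \<Longrightarrow> (\<Sum>a<n. \<Sum>b<n. cnj (A $$ (a, b)) * A $$ (a, b)) = complex_of_real (frob2 A)"
  by (simp add: frob2_carrier cnj_mult_eq_norm_sq)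

text \<open>Schur's lemma: an eigenspace of \<open>Y\<close> is invariant, hence everything.\<close>
lemma irreducible_commuting_mat_scalar:
  assumes irr: "irreducible_rep G n \<sigma>" and \<sigma>: "\<forall>g\<in>carrier G. \<sigma> g \<in> carrier_mat n n"
    and Y: "Y \<in> carrier_mat n n" and comm: "\<forall>g\<in>carrier G. \<sigma> g * Y = Y * \<sigma> g"
  shows "\<exists>c. Y = c \<cdot>\<^sub>m 1\<^sub>m n"
proof -
  have "n > 0" using irr unfolding irreducible_rep_def by auto
  then have "\<not> constant (poly (char_poly Y))"
    using degree_monic_char_poly[OF Y] by (simp add: constant_degree)
  then obtain c where "poly (char_poly Y) c = 0" using fundamental_theorem_of_algebra by blast
  then have "eigenvalue Y c" using eigenvalue_root_char_poly[OF Y] by simp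
  then obtain v where v: "v \<in> carrier_vec n" "v \<noteq> 0\<^sub>v n" "Y *\<^sub>v v = c \<cdot>\<^sub>v v"
    using Y unfolding eigenvalue_def eigenvector_def by auto
  define W where "W = {w \<in> carrier_vec n. Y *\<^sub>v w = c \<cdot>\<^sub>v w}"
  have "cvec_subspace n W"
    unfolding cvec_subspace_def W_def using Y
    by (auto simp: mult_add_distrib_mat_vec smult_add_distrib_vec mult_mat_vec smult_smult_assoc mult.commute)
  moreover have "\<forall>g\<in>carrier G. \<forall>w\<in>W. \<sigma> g *\<^sub>v w \<in> W"
  proof (intro ballI)
    fix g w assume g: "g \<in> carrier G" and w: "w \<in> W"
    have \<sigma>g: "\<sigma> g \<in> carrier_mat n n" using \<sigma> g by auto
    have wc: "w \<in> carrier_vec n" and Yw: "Y *\<^sub>v w = c \<cdot>\<^sub>v w" using w W_def by auto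
    have "Y *\<^sub>v (\<sigma> g *\<^sub>v w) = (\<sigma> g * Y) *\<^sub>v w" using Y \<sigma>g wc comm g by simp
    also have "\<dots> = c \<cdot>\<^sub>v (\<sigma> g *\<^sub>v w)" using Y \<sigma>g wc Yw by (simp add: mult_mat_vec)
    finally show "\<sigma> g *\<^sub>v w \<in> W" using \<sigma>g wc unfolding W_def by auto
  qed
  ultimately have "W = {0\<^sub>v n} \<or> W = carrier_vec n" using irr unfolding irreducible_rep_def by blast
  then have W: "W = carrier_vec n" using v W_def by auto
  have "Y = c \<cdot>\<^sub>m 1\<^sub>m n"
  proof (rule eq_matI)
    fix i j assume "i < dim_row (c \<cdot>\<^sub>m 1\<^sub>m n)" "j < dim_col (c \<cdot>\<^sub>m 1\<^sub>m n)"
    then have i: "i < n" and j: "j < n" by auto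
    have "unit_vec n j \<in> W" using W j by simp
    then have "Y *\<^sub>v unit_vec n j = c \<cdot>\<^sub>v unit_vec n j" unfolding W_def by simp
    then show "Y $$ (i, j) = (c \<cdot>\<^sub>m 1\<^sub>m n) $$ (i, j)"
      using mult_mat_vec_unit_vec_index[OF Y i j] i j by (simp add: unit_vec_def)
  qed (use Y in auto)
  then show ?thesis by blast
qed

lemma borel_measurable_cnj:
  "f \<in> borel_measurable M \<Longrightarrow> (\<lambda>x. cnj (f x :: complex)) \<in> borel_measurable M"
  by (intro borel_measurable_continuous_on[where f=cnj] continuous_intros) auto

lemma L2_zero: "L2 M (\<lambda>x. 0)"
  unfolding L2_def by auto

lemma L2_cmult: "L2 M f \<Longrightarrow> L2 M (\<lambda>x. c * f x)"
  unfolding L2_def by (auto simp: norm_mult power_mult_distrib)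

lemma L2_add:
  assumes f: "L2 M f" and h: "L2 M h"
  shows "L2 M (\<lambda>x. f x + h x)"
  unfolding L2_def
proof
  have [measurable]: "f \<in> borel_measurable M" "h \<in> borel_measurable M"
    using f h unfolding L2_def by auto
  show "(\<lambda>x. f x + h x) \<in> borel_measurable M" by measurable
  have bound: "(cmod (f x + h x))\<^sup>2 \<le> 2 * (cmod (f x))\<^sup>2 + 2 * (cmod (h x))\<^sup>2" for x
  proof -
    have "(cmod (f x + h x))\<^sup>2 \<le> (cmod (f x) + cmod (h x))\<^sup>2"
      by (intro power_mono norm_triangle_ineq) auto
    also have "\<dots> \<le> 2 * (cmod (f x))\<^sup>2 + 2 * (cmod (h x))\<^sup>2"
      using zero_le_power2[of "cmod (f x) - cmod (h x)"] by (simp add: power2_diff power2_sum)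
    finally show ?thesis .
  qed
  show "integrable M (\<lambda>x. (cmod (f x + h x))\<^sup>2)"
  proof (rule Bochner_Integration.integrable_bound)
    show "integrable M (\<lambda>x. 2 * (cmod (f x))\<^sup>2 + 2 * (cmod (h x))\<^sup>2)"
      using f h unfolding L2_def by auto
    show "AE x in M. norm ((cmod (f x + h x))\<^sup>2) \<le> norm (2 * (cmod (f x))\<^sup>2 + 2 * (cmod (h x))\<^sup>2)"
      using bound by (intro AE_I2) simp
  qed measurable
qed

lemma L2_diff: "L2 M f \<Longrightarrow> L2 M h \<Longrightarrow> L2 M (\<lambda>x. f x - h x)"
  using L2_add[of M f "\<lambda>x. -1 * h x"] L2_cmult[of M h "-1"] by simp

lemma L2_sum: "finite I \<Longrightarrow> (\<And>i. i \<in> I \<Longrightarrow> L2 M (f i)) \<Longrightarrow> L2 M (\<lambda>x. \<Sum>i\<in>I. f i x)"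
  by (induction I rule: finite_induct) (auto intro: L2_zero L2_add)

lemma L2_integrable_mult_cnj:
  assumes f: "L2 M f" and h: "L2 M h"
  shows "integrable M (\<lambda>x. f x * cnj (h x))"
proof (rule Bochner_Integration.integrable_bound)
  show "integrable M (\<lambda>x. (cmod (f x))\<^sup>2 + (cmod (h x))\<^sup>2)" using f h unfolding L2_def by auto
  show "(\<lambda>x. f x * cnj (h x)) \<in> borel_measurable M"
    using f h unfolding L2_def by (intro borel_measurable_times borel_measurable_cnj) auto
  have "cmod (f x) * cmod (h x) \<le> (cmod (f x))\<^sup>2 + (cmod (h x))\<^sup>2" for x
  proof -
    have "2 * (cmod (f x) * cmod (h x)) \<le> (cmod (f x))\<^sup>2 + (cmod (h x))\<^sup>2"
      using zero_le_power2[of "cmod (f x) - cmod (h x)"] by (simp add: power2_diff)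
    moreover have "0 \<le> cmod (f x) * cmod (h x)" by simp
    ultimately show ?thesis by linarith
  qed
  then show "AE x in M. norm (f x * cnj (h x)) \<le> norm ((cmod (f x))\<^sup>2 + (cmod (h x))\<^sup>2)"
    by (intro AE_I2) (simp add: norm_mult)
qed

lemma integral_mult_cnj_self:
  "(\<integral>x. f x * cnj (f x) \<partial>M) = complex_of_real (\<integral>x. (cmod (f x))\<^sup>2 \<partial>M)"
  by (simp flip: complex_norm_square integral_complex_of_real)

lemma integral_sum_triple:
  fixes f :: "'i \<Rightarrow> nat \<Rightarrow> nat \<Rightarrow> 'a \<Rightarrow> complex"
  assumes "\<And>i a b. i \<in> F \<Longrightarrow> a < n i \<Longrightarrow> b < n i \<Longrightarrow> integrable M (f i a b)"
  shows "(\<integral>x. (\<Sum>i\<in>F. \<Sum>a<n i. \<Sum>b<n i. c i a b * f i a b x) \<partial>M) =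
    (\<Sum>i\<in>F. \<Sum>a<n i. \<Sum>b<n i. c i a b * (\<integral>x. f i a b x \<partial>M))"
proof -
  note int = integrable_sum integrable_mult_right assms
  have "(\<integral>x. (\<Sum>i\<in>F. \<Sum>a<n i. \<Sum>b<n i. c i a b * f i a b x) \<partial>M) =
    (\<Sum>i\<in>F. \<integral>x. (\<Sum>a<n i. \<Sum>b<n i. c i a b * f i a b x) \<partial>M)"
    by (rule Bochner_Integration.integral_sum) (auto intro!: int)
  also have "\<dots> = (\<Sum>i\<in>F. \<Sum>a<n i. \<integral>x. (\<Sum>b<n i. c i a b * f i a b x) \<partial>M)"
    by (intro sum.cong refl Bochner_Integration.integral_sum) (auto intro!: int)
  also have "\<dots> = (\<Sum>i\<in>F. \<Sum>a<n i. \<Sum>b<n i. \<integral>x. c i a b * f i a b x \<partial>M)"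
    by (intro sum.cong refl Bochner_Integration.integral_sum) (auto intro!: int)
  finally show ?thesis by simp
qed

text \<open>Integrate \<open>|u| \<le> t/2 + |u|\<^sup>2/(2t)\<close>.\<close>
lemma (in prob_space) L1_le_L2_bound:
  assumes u: "L2 M u" and t: "t > 0" and b: "(\<integral>x. (cmod (u x))\<^sup>2 \<partial>M) \<le> t\<^sup>2"
  shows "integrable M (\<lambda>x. cmod (u x))" and "(\<integral>x. cmod (u x) \<partial>M) \<le> t"
proof -
  have pw: "cmod (u x) \<le> t / 2 + (cmod (u x))\<^sup>2 / (2 * t)" for x
  proof -
    have "2 * t * cmod (u x) \<le> t\<^sup>2 + (cmod (u x))\<^sup>2"
      using zero_le_power2[of "cmod (u x) - t"] by (simp add: power2_diff algebra_simps)
    then show ?thesis using t by (simp add: field_simps power2_eq_square)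
  qed
  have i2: "integrable M (\<lambda>x. t / 2 + (cmod (u x))\<^sup>2 / (2 * t))"
    using u unfolding L2_def by auto
  show i1: "integrable M (\<lambda>x. cmod (u x))"
    using u pw unfolding L2_def
    by (intro Bochner_Integration.integrable_bound[OF i2]) (auto intro!: AE_I2 order_trans[OF _ abs_ge_self])
  have "(\<integral>x. cmod (u x) \<partial>M) \<le> (\<integral>x. t / 2 + (cmod (u x))\<^sup>2 / (2 * t) \<partial>M)"
    by (rule integral_mono[OF i1 i2 pw])
  also have "\<dots> = t / 2 + (\<integral>x. (cmod (u x))\<^sup>2 \<partial>M) / (2 * t)"
    using u unfolding L2_def by (simp add: prob_space)
  also have "\<dots> \<le> t / 2 + t\<^sup>2 / (2 * t)"
    using b t by (intro add_left_mono divide_right_mono) auto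
  also have "\<dots> = t" using t by (simp add: power2_eq_square)
  finally show "(\<integral>x. cmod (u x) \<partial>M) \<le> t" .
qed

text \<open>Since \<open>\<parallel>f\<^sub>k\<^sub>+\<^sub>1 - f\<^sub>k\<parallel>\<^sub>1 \<le> 2\<^sup>-\<^sup>k\<close>, the series of increments converges absolutely almost
  everywhere.\<close>
lemma (in prob_space) L2_fast_Cauchy_AE_convergent:
  assumes f: "\<And>k. L2 M (f k)"
    and inc: "\<And>k. (\<integral>x. (cmod (f (Suc k) x - f k x))\<^sup>2 \<partial>M) \<le> (1/4) ^ k"
  shows "AE x in M. convergent (\<lambda>k. f k x)"
proof -
  have [measurable]: "f k \<in> borel_measurable M" for k using f unfolding L2_def by auto
  define D where "D k x = cmod (f (Suc k) x - f k x)" for k x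
  have D_measurable[measurable]: "D k \<in> borel_measurable M" for k unfolding D_def by measurable
  have D_int: "integrable M (D k) \<and> (\<integral>x. D k x \<partial>M) \<le> (1/2) ^ k" for k
  proof -
    have "(\<integral>x. (cmod (f (Suc k) x - f k x))\<^sup>2 \<partial>M) \<le> ((1/2) ^ k)\<^sup>2"
      using inc[of k] by (simp add: power2_eq_square flip: power_mult_distrib)
    then show ?thesis
      using L1_le_L2_bound[OF L2_diff[OF f f], of "(1/2) ^ k"] unfolding D_def by simp
  qed
  have "(\<integral>\<^sup>+x. (\<Sum>k. ennreal (D k x)) \<partial>M) = (\<Sum>k. \<integral>\<^sup>+x. ennreal (D k x) \<partial>M)"
    by (rule nn_integral_suminf) measurable
  also have "\<dots> = (\<Sum>k. ennreal (\<integral>x. D k x \<partial>M))"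
    using D_int by (intro suminf_cong nn_integral_eq_integral) (auto simp: D_def[abs_def])
  also have "\<dots> \<le> (\<Sum>k. ennreal ((1/2) ^ k))"
    using D_int by (intro suminf_le summableI) auto
  also have "\<dots> = ennreal (\<Sum>k. (1/2::real) ^ k)"
    by (rule suminf_ennreal2) auto
  also have "\<dots> < \<infinity>" by simp
  finally have "(\<integral>\<^sup>+x. (\<Sum>k. ennreal (D k x)) \<partial>M) \<noteq> \<infinity>" by simp
  then have "AE x in M. (\<Sum>k. ennreal (D k x)) \<noteq> \<infinity>"
    by (intro nn_integral_noteq_infinite) measurable
  then show ?thesis
  proof (rule eventually_mono)
    fix x assume "(\<Sum>k. ennreal (D k x)) \<noteq> \<infinity>"
    then have "summable (\<lambda>k. D k x)"
      by (intro summable_suminf_not_top) (auto simp: D_def)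
    then have "summable (\<lambda>k. f (Suc k) x - f k x)"
      unfolding D_def by (rule summable_norm_cancel)
    then have "convergent (\<lambda>n. f 0 x + (\<Sum>k<n. f (Suc k) x - f k x))"
      by (simp add: summable_iff_convergent convergent_add_const_iff)
    then show "convergent (\<lambda>k. f k x)"
      by (simp add: sum_lessThan_telescope[where f="\<lambda>k. f k x"])
  qed
qed

text \<open>Fatou's lemma passes the Cauchy bound to an almost everywhere limit of a subsequence.\<close>
lemma L2_AE_limit_dist_le:
  assumes f: "\<And>k. L2 M (f k)" and s: "\<And>k. k \<le> s k"
    and lim: "AE x in M. (\<lambda>k. f (s k) x) \<longlonglongrightarrow> h x" and h: "h \<in> borel_measurable M"
    and cau: "\<And>m N. m \<le> N \<Longrightarrow> (\<integral>x. (cmod (f N x - f m x))\<^sup>2 \<partial>M) \<le> e m"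
  shows "L2 M (\<lambda>x. h x - f m x)" and "(\<integral>x. (cmod (h x - f m x))\<^sup>2 \<partial>M) \<le> e m"
proof -
  have [measurable]: "f k \<in> borel_measurable M" "h \<in> borel_measurable M" for k
    using f h unfolding L2_def by auto
  have "(\<integral>\<^sup>+x. ennreal ((cmod (h x - f m x))\<^sup>2) \<partial>M) =
      (\<integral>\<^sup>+x. liminf (\<lambda>k. ennreal ((cmod (f (s k) x - f m x))\<^sup>2)) \<partial>M)"
  proof (rule nn_integral_cong_AE)
    show "AE x in M. ennreal ((cmod (h x - f m x))\<^sup>2) = liminf (\<lambda>k. ennreal ((cmod (f (s k) x - f m x))\<^sup>2))"
      using lim
    proof (rule eventually_mono)
      fix x assume "(\<lambda>k. f (s k) x) \<longlonglongrightarrow> h x"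
      then have "(\<lambda>k. ennreal ((cmod (f (s k) x - f m x))\<^sup>2)) \<longlonglongrightarrow> ennreal ((cmod (h x - f m x))\<^sup>2)"
        by (intro tendsto_ennrealI tendsto_intros)
      then show "ennreal ((cmod (h x - f m x))\<^sup>2) = liminf (\<lambda>k. ennreal ((cmod (f (s k) x - f m x))\<^sup>2))"
        using lim_imp_Liminf[OF trivial_limit_sequentially] by metis
    qed
  qed
  also have "\<dots> \<le> liminf (\<lambda>k. \<integral>\<^sup>+x. ennreal ((cmod (f (s k) x - f m x))\<^sup>2) \<partial>M)"
    by (rule nn_integral_liminf) measurable
  also have "\<dots> \<le> ennreal (e m)"
  proof (rule Liminf_le)
    have "eventually (\<lambda>k. m \<le> s k) sequentially"
      unfolding eventually_sequentially by (meson le_trans s)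
    then show "eventually (\<lambda>k. (\<integral>\<^sup>+x. ennreal ((cmod (f (s k) x - f m x))\<^sup>2) \<partial>M) \<le> ennreal (e m)) sequentially"
    proof (rule eventually_mono)
      fix k assume "m \<le> s k"
      moreover have "integrable M (\<lambda>x. (cmod (f (s k) x - f m x))\<^sup>2)"
        using L2_diff[OF f f] unfolding L2_def by auto
      ultimately show "(\<integral>\<^sup>+x. ennreal ((cmod (f (s k) x - f m x))\<^sup>2) \<partial>M) \<le> ennreal (e m)"
        using cau[of m "s k"] by (simp add: nn_integral_eq_integral ennreal_leI)
    qed
  qed simp
  finally have bound: "(\<integral>\<^sup>+x. ennreal ((cmod (h x - f m x))\<^sup>2) \<partial>M) \<le> ennreal (e m)" .
  have int: "integrable M (\<lambda>x. (cmod (h x - f m x))\<^sup>2)"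
  proof (rule integrableI_bounded)
    have "(\<integral>\<^sup>+x. ennreal (norm ((cmod (h x - f m x))\<^sup>2)) \<partial>M) = (\<integral>\<^sup>+x. ennreal ((cmod (h x - f m x))\<^sup>2) \<partial>M)"
      by simp
    also have "\<dots> \<le> ennreal (e m)" by (rule bound)
    also have "\<dots> < \<infinity>" by simp
    finally show "(\<integral>\<^sup>+x. ennreal (norm ((cmod (h x - f m x))\<^sup>2)) \<partial>M) < \<infinity>" .
  qed measurable
  then show "L2 M (\<lambda>x. h x - f m x)" unfolding L2_def by auto
  have "0 \<le> e m" using cau[of m m] by simp
  then show "(\<integral>x. (cmod (h x - f m x))\<^sup>2 \<partial>M) \<le> e m"
    using bound by (simp add: nn_integral_eq_integral[OF int])
qed

text \<open>Completeness of \<open>L\<^sup>2\<close>: the limit is taken along a subsequence \<open>s\<close> with \<open>e (s k) \<le> 4\<^sup>-\<^sup>k\<close>.\<close>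
lemma (in prob_space) L2_Cauchy_limit:
  assumes f: "\<And>k. L2 M (f k)" and e: "e \<longlonglongrightarrow> 0"
    and cau: "\<And>m N. m \<le> N \<Longrightarrow> (\<integral>x. (cmod (f N x - f m x))\<^sup>2 \<partial>M) \<le> e m"
  shows "\<exists>h. L2 M h \<and> (\<forall>m. (\<integral>x. (cmod (h x - f m x))\<^sup>2 \<partial>M) \<le> e m)"
proof -
  have "\<forall>k. \<exists>N. \<forall>n\<ge>N. e n \<le> (1/4) ^ k"
  proof
    fix k :: nat
    have "eventually (\<lambda>n. e n < (1/4) ^ k) sequentially"
      using order_tendstoD(2)[OF e, of "(1/4) ^ k"] by simp
    then show "\<exists>N. \<forall>n\<ge>N. e n \<le> (1/4) ^ k"
      unfolding eventually_sequentially by (meson less_imp_le)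
  qed
  then obtain N where N: "\<And>k n. n \<ge> N k \<Longrightarrow> e n \<le> (1/4) ^ k"
    using choice[of "\<lambda>k N. \<forall>n\<ge>N. e n \<le> (1/4) ^ k"] by blast
  define s where "s k = k + Max (N ` {..k})" for k
  have s_Suc: "s k < s (Suc k)" for k
  proof -
    have "Max (N ` {..k}) \<le> Max (N ` {..Suc k})" by (intro Max_mono) auto
    then show ?thesis unfolding s_def by linarith
  qed
  have s_ge: "k \<le> s k" for k
    unfolding s_def by simp
  have N_le_s: "N k \<le> s k" for k
    unfolding s_def by (simp add: trans_le_add2)
  have "AE x in M. convergent (\<lambda>k. f (s k) x)"
  proof (rule L2_fast_Cauchy_AE_convergent)
    fix k show "(\<integral>x. (cmod (f (s (Suc k)) x - f (s k) x))\<^sup>2 \<partial>M) \<le> (1/4) ^ k"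
      using cau[of "s k" "s (Suc k)"] N[OF N_le_s[of k]] s_Suc[of k] by simp
  qed (rule f)
  define h where "h x = lim (\<lambda>k. f (s k) x)" for x
  from \<open>AE x in M. convergent (\<lambda>k. f (s k) x)\<close>
  have lim: "AE x in M. (\<lambda>k. f (s k) x) \<longlonglongrightarrow> h x"
    unfolding h_def by (simp add: convergent_LIMSEQ_iff)
  have [measurable]: "f k \<in> borel_measurable M" for k using f unfolding L2_def by auto
  have "h \<in> borel_measurable M" unfolding h_def by measurable
  note limit = L2_AE_limit_dist_le[OF f s_ge lim this cau]
  have "L2 M (\<lambda>x. (h x - f 0 x) + f 0 x)"
    by (rule L2_add[OF limit(1) f])
  then have "L2 M h" by simp
  then show ?thesis using limit(2) by blast
qed

locale compact_group_dual = G: group G for G :: "'g monoid" +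
  fixes T :: "'g topology" and M :: "'g measure"
    and Ghat :: "'x set" and d :: "'x \<Rightarrow> nat" and \<rho> :: "'x \<Rightarrow> 'g \<Rightarrow> complex mat"
  assumes Haar: "normalized_Haar G T M" and dual: "complete_dual G T Ghat d \<rho>"
    and topspace_eq: "topspace T = carrier G"
begin

lemma space_Haar: "space M = carrier G"
  using Haar unfolding normalized_Haar_def by auto

lemma sets_Haar: "sets M = sigma_sets (carrier G) {U. openin T U}"
  using Haar unfolding normalized_Haar_def by auto

sublocale Haar: prob_space M
  using Haar unfolding normalized_Haar_def by auto

lemma continuous_map_borel_measurable:
  assumes "continuous_map T euclidean (f :: 'g \<Rightarrow> 'b::topological_space)"
  shows "f \<in> borel_measurable M"
proof (rule borel_measurableI)
  fix S :: "'b set" assume "open S"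
  then have "openin T {x \<in> topspace T. f x \<in> S}"
    using assms by (metis continuous_map open_openin)
  moreover have "f -` S \<inter> space M = {x \<in> topspace T. f x \<in> S}"
    using topspace_eq space_Haar by auto
  ultimately show "f -` S \<inter> space M \<in> sets M"
    unfolding sets_Haar by (auto intro: sigma_sets.Basic)
qed

lemma vimage_left_transl:
  assumes h: "h \<in> carrier G" and A: "A \<subseteq> carrier G"
  shows "(\<lambda>x. h \<otimes>\<^bsub>G\<^esub> x) -` A \<inter> carrier G = (\<lambda>x. inv\<^bsub>G\<^esub> h \<otimes>\<^bsub>G\<^esub> x) ` A"
proof (intro equalityI subsetI)
  fix x assume "x \<in> (\<lambda>x. h \<otimes>\<^bsub>G\<^esub> x) -` A \<inter> carrier G"
  moreover from this have "x = inv\<^bsub>G\<^esub> h \<otimes>\<^bsub>G\<^esub> (h \<otimes>\<^bsub>G\<^esub> x)"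
    using h by (simp add: G.inv_solve_left)
  ultimately show "x \<in> (\<lambda>x. inv\<^bsub>G\<^esub> h \<otimes>\<^bsub>G\<^esub> x) ` A" by blast
next
  fix x assume "x \<in> (\<lambda>x. inv\<^bsub>G\<^esub> h \<otimes>\<^bsub>G\<^esub> x) ` A"
  then obtain y where "y \<in> A" and "x = inv\<^bsub>G\<^esub> h \<otimes>\<^bsub>G\<^esub> y" by blast
  moreover have "y \<in> carrier G" using \<open>y \<in> A\<close> A by auto
  ultimately show "x \<in> (\<lambda>x. h \<otimes>\<^bsub>G\<^esub> x) -` A \<inter> carrier G"
    using h by (simp add: G.m_assoc[symmetric])
qed

lemma left_transl_image:
  "g \<in> carrier G \<Longrightarrow> A \<in> sets M \<Longrightarrow>
   (\<lambda>x. g \<otimes>\<^bsub>G\<^esub> x) ` A \<in> sets M \<and> emeasure M ((\<lambda>x. g \<otimes>\<^bsub>G\<^esub> x) ` A) = emeasure M A"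
  using Haar unfolding normalized_Haar_def by blast

lemma distr_left_transl:
  assumes h: "h \<in> carrier G"
  shows "(\<lambda>x. h \<otimes>\<^bsub>G\<^esub> x) \<in> measurable M M" and "distr M M (\<lambda>x. h \<otimes>\<^bsub>G\<^esub> x) = M"
proof -
  have ih: "inv\<^bsub>G\<^esub> h \<in> carrier G" using h by simp
  have vimage: "(\<lambda>x. h \<otimes>\<^bsub>G\<^esub> x) -` A \<inter> space M = (\<lambda>x. inv\<^bsub>G\<^esub> h \<otimes>\<^bsub>G\<^esub> x) ` A"
    if "A \<in> sets M" for A
    using vimage_left_transl[OF h] sets.sets_into_space[OF that] by (simp add: space_Haar)
  show meas: "(\<lambda>x. h \<otimes>\<^bsub>G\<^esub> x) \<in> measurable M M"
  proof (rule measurableI)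
    show "h \<otimes>\<^bsub>G\<^esub> x \<in> space M" if "x \<in> space M" for x
      using h that by (simp add: space_Haar)
    show "(\<lambda>x. h \<otimes>\<^bsub>G\<^esub> x) -` A \<inter> space M \<in> sets M" if "A \<in> sets M" for A
      using left_transl_image[OF ih that] vimage[OF that] by simp
  qed
  show "distr M M (\<lambda>x. h \<otimes>\<^bsub>G\<^esub> x) = M"
  proof (rule measure_eqI)
    fix A assume "A \<in> sets (distr M M (\<lambda>x. h \<otimes>\<^bsub>G\<^esub> x))"
    then have A: "A \<in> sets M" by simp
    show "emeasure (distr M M (\<lambda>x. h \<otimes>\<^bsub>G\<^esub> x)) A = emeasure M A"
      using emeasure_distr[OF meas A] vimage[OF A] left_transl_image[OF ih A] by simp
  qed simp
qed

lemma integral_left_transl: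
  fixes f :: "'g \<Rightarrow> 'b::{banach, second_countable_topology}"
  assumes h: "h \<in> carrier G" and f: "f \<in> borel_measurable M"
  shows "(\<integral>x. f (h \<otimes>\<^bsub>G\<^esub> x) \<partial>M) = (\<integral>x. f x \<partial>M)"
  using integral_distr[OF distr_left_transl(1)[OF h] f] distr_left_transl(2)[OF h] by simp

lemma rep_facts: "\<xi> \<in> Ghat \<Longrightarrow> unitary_rep G T (d \<xi>) (\<rho> \<xi>) \<and> irreducible_rep G (d \<xi>) (\<rho> \<xi>)"
  using dual unfolding complete_dual_def by auto

lemma rep_carrier: "\<xi> \<in> Ghat \<Longrightarrow> g \<in> carrier G \<Longrightarrow> \<rho> \<xi> g \<in> carrier_mat (d \<xi>) (d \<xi>)"
  using rep_facts unfolding unitary_rep_def by auto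

lemma rep_unitary: "\<xi> \<in> Ghat \<Longrightarrow> g \<in> carrier G \<Longrightarrow> mat_adjoint (\<rho> \<xi> g) * \<rho> \<xi> g = 1\<^sub>m (d \<xi>)"
  using rep_facts unfolding unitary_rep_def by auto

lemma rep_mult:
  "\<xi> \<in> Ghat \<Longrightarrow> g \<in> carrier G \<Longrightarrow> h \<in> carrier G \<Longrightarrow> \<rho> \<xi> (g \<otimes>\<^bsub>G\<^esub> h) = \<rho> \<xi> g * \<rho> \<xi> h"
  using rep_facts unfolding unitary_rep_def by auto

lemma rep_entry_measurable:
  "\<xi> \<in> Ghat \<Longrightarrow> a < d \<xi> \<Longrightarrow> b < d \<xi> \<Longrightarrow> (\<lambda>g. \<rho> \<xi> g $$ (a, b)) \<in> borel_measurable M"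
  using rep_facts unfolding unitary_rep_def by (auto intro!: continuous_map_borel_measurable)

lemma rep_irreducible: "\<xi> \<in> Ghat \<Longrightarrow> irreducible_rep G (d \<xi>) (\<rho> \<xi>)"
  using rep_facts by auto

lemma rep_dim_pos: "\<xi> \<in> Ghat \<Longrightarrow> d \<xi> > 0"
  using rep_irreducible[of \<xi>] unfolding irreducible_rep_def by auto

lemma rep_columns_orthonormal:
  assumes "\<xi> \<in> Ghat" "g \<in> carrier G" "e < d \<xi>" "b < d \<xi>"
  shows "(\<Sum>a<d \<xi>. cnj (\<rho> \<xi> g $$ (a, e)) * \<rho> \<xi> g $$ (a, b)) = (if e = b then 1 else 0)"
proof -
  have R: "\<rho> \<xi> g \<in> carrier_mat (d \<xi>) (d \<xi>)" using rep_carrier assms by auto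
  have "(mat_adjoint (\<rho> \<xi> g) * \<rho> \<xi> g) $$ (e, b) = (\<Sum>a<d \<xi>. cnj (\<rho> \<xi> g $$ (a, e)) * \<rho> \<xi> g $$ (a, b))"
    using assms R by (subst index_mult_mat_sum[OF mat_adjoint_carrier[OF R] R]) (auto simp: index_mat_adjoint)
  then show ?thesis using rep_unitary[OF assms(1,2)] assms by simp
qed

lemma rep_entry_norm_le_1:
  assumes "\<xi> \<in> Ghat" "g \<in> carrier G" "a < d \<xi>" "b < d \<xi>"
  shows "cmod (\<rho> \<xi> g $$ (a, b)) \<le> 1"
proof -
  have "complex_of_real (\<Sum>a<d \<xi>. (cmod (\<rho> \<xi> g $$ (a, b)))\<^sup>2) = 1"
    using rep_columns_orthonormal[OF assms(1,2,4,4)] by (simp add: cnj_mult_eq_norm_sq)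
  then have "(\<Sum>a<d \<xi>. (cmod (\<rho> \<xi> g $$ (a, b)))\<^sup>2) = 1"
    using of_real_eq_1_iff by blast
  moreover have "(cmod (\<rho> \<xi> g $$ (a, b)))\<^sup>2 \<le> (\<Sum>a<d \<xi>. (cmod (\<rho> \<xi> g $$ (a, b)))\<^sup>2)"
    using assms(3) by (intro member_le_sum) auto
  ultimately have "(cmod (\<rho> \<xi> g $$ (a, b)))\<^sup>2 \<le> 1" by simp
  then show ?thesis by (simp add: power_le_one_iff abs_le_square_iff[symmetric])
qed

lemma L2_rep_entry:
  assumes "\<xi> \<in> Ghat" "a < d \<xi>" "b < d \<xi>"
  shows "L2 M (\<lambda>g. \<rho> \<xi> g $$ (a, b))"
  unfolding L2_def
proof
  show m: "(\<lambda>g. \<rho> \<xi> g $$ (a, b)) \<in> borel_measurable M"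
    using rep_entry_measurable assms by auto
  show "integrable M (\<lambda>g. (cmod (\<rho> \<xi> g $$ (a, b)))\<^sup>2)"
  proof (rule Haar.integrable_const_bound[where B=1])
    show "AE x in M. norm ((cmod (\<rho> \<xi> x $$ (a, b)))\<^sup>2) \<le> 1"
      using rep_entry_norm_le_1[OF assms(1) _ assms(2,3)] space_Haar by (intro AE_I2) (simp add: power_le_one)
  qed (intro borel_measurable_power measurable_compose[OF m borel_measurable_norm])
qed

end

section \<open>Schur orthogonality\<close>

lemma index_mult_mult_mat_adjoint:
  assumes A: "A \<in> carrier_mat n n" and X: "X \<in> carrier_mat n m" and B: "B \<in> carrier_mat m m"
    and a: "a < n" and c: "c < m"
  shows "(A * X * mat_adjoint B) $$ (a, c) = (\<Sum>r<m. \<Sum>p<n. A $$ (a, p) * X $$ (p, r) * cnj (B $$ (c, r)))"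
proof -
  have "(A * X * mat_adjoint B) $$ (a, c) = (\<Sum>r<m. (A * X) $$ (a, r) * mat_adjoint B $$ (r, c))"
    using A X B a c by (intro index_mult_mat_sum) (auto intro: mat_adjoint_carrier)
  also have "\<dots> = (\<Sum>r<m. (\<Sum>p<n. A $$ (a, p) * X $$ (p, r)) * cnj (B $$ (c, r)))"
    using A X B a c by (intro sum.cong refl) (simp add: index_mult_mat_sum[OF A X] index_mat_adjoint[OF B] del: index_mult_mat)
  finally show ?thesis by (simp add: sum_distrib_right)
qed

lemma intertwiner_gram_commute:
  assumes A: "A \<in> carrier_mat n n" and B: "B \<in> carrier_mat m m" and X: "X \<in> carrier_mat n m"
    and AX: "A * X = X * B" and BX: "B * mat_adjoint X = mat_adjoint X * A"
  shows "B * (mat_adjoint X * X) = (mat_adjoint X * X) * B"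
proof -
  have aX: "mat_adjoint X \<in> carrier_mat m n" by (rule mat_adjoint_carrier[OF X])
  have "B * (mat_adjoint X * X) = (B * mat_adjoint X) * X" using B aX X by simp
  also have "\<dots> = mat_adjoint X * (A * X)" using BX A aX X by simp
  also have "\<dots> = (mat_adjoint X * X) * B" using AX B aX X by simp
  finally show ?thesis .
qed

context compact_group_dual
begin

definition coeff_inner :: "'x \<Rightarrow> nat \<Rightarrow> nat \<Rightarrow> 'x \<Rightarrow> nat \<Rightarrow> nat \<Rightarrow> complex" where
  "coeff_inner \<xi> a b \<xi>' c e = (\<integral>g. \<rho> \<xi> g $$ (a, b) * cnj (\<rho> \<xi>' g $$ (c, e)) \<partial>M)"

lemma integrable_rep_entry_mult_cnj:
  "\<xi> \<in> Ghat \<Longrightarrow> \<xi>' \<in> Ghat \<Longrightarrow> a < d \<xi> \<Longrightarrow> b < d \<xi> \<Longrightarrow> c < d \<xi>' \<Longrightarrow> e < d \<xi>' \<Longrightarrow>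
   integrable M (\<lambda>g. \<rho> \<xi> g $$ (a, b) * cnj (\<rho> \<xi>' g $$ (c, e)))"
  by (intro L2_integrable_mult_cnj L2_rep_entry)

text \<open>Averaging over \<open>G\<close>: by left invariance of the Haar measure, the matrix
  \<open>X = \<integral> \<rho>\<^sub>\<xi>(g) E\<^sub>b\<^sub>e \<rho>\<^sub>\<xi>\<^sub>'(g)\<^sup>* dg\<close> of coefficient inner products is fixed by \<open>X \<mapsto> \<rho>\<^sub>\<xi>(h) X \<rho>\<^sub>\<xi>\<^sub>'(h)\<^sup>*\<close>.\<close>
lemma coeff_inner_mat_invariant:
  assumes \<xi>: "\<xi> \<in> Ghat" "\<xi>' \<in> Ghat" and b: "b < d \<xi>" and e: "e < d \<xi>'" and h: "h \<in> carrier G"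
  defines "X \<equiv> mat (d \<xi>) (d \<xi>') (\<lambda>(a, c). coeff_inner \<xi> a b \<xi>' c e)"
  shows "\<rho> \<xi> h * X * mat_adjoint (\<rho> \<xi>' h) = X"
proof (rule eq_matI)
  have Rh: "\<rho> \<xi> h \<in> carrier_mat (d \<xi>) (d \<xi>)" and Rh': "\<rho> \<xi>' h \<in> carrier_mat (d \<xi>') (d \<xi>')"
    using rep_carrier \<xi> h by auto
  have Xc: "X \<in> carrier_mat (d \<xi>) (d \<xi>')" unfolding X_def by auto
  show "dim_row (\<rho> \<xi> h * X * mat_adjoint (\<rho> \<xi>' h)) = dim_row X"
       "dim_col (\<rho> \<xi> h * X * mat_adjoint (\<rho> \<xi>' h)) = dim_col X"
    using Rh Xc mat_adjoint_carrier[OF Rh'] by auto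
  fix a c assume "a < dim_row X" "c < dim_col X"
  then have a: "a < d \<xi>" and c: "c < d \<xi>'" using Xc by auto
  define k where "k r p g = \<rho> \<xi> h $$ (a, p) * cnj (\<rho> \<xi>' h $$ (c, r)) * (\<rho> \<xi> g $$ (p, b) * cnj (\<rho> \<xi>' g $$ (r, e)))"
    for r p g
  have int: "integrable M (k r p)" if "p < d \<xi>" "r < d \<xi>'" for p r
    unfolding k_def by (intro integrable_mult_right integrable_rep_entry_mult_cnj) (use \<xi> b e that in auto)
  have hg: "\<rho> \<xi> (h \<otimes>\<^bsub>G\<^esub> g) $$ (a, b) * cnj (\<rho> \<xi>' (h \<otimes>\<^bsub>G\<^esub> g) $$ (c, e)) = (\<Sum>r<d \<xi>'. \<Sum>p<d \<xi>. k r p g)"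
    if g: "g \<in> carrier G" for g
  proof -
    have Rg: "\<rho> \<xi> g \<in> carrier_mat (d \<xi>) (d \<xi>)" and Rg': "\<rho> \<xi>' g \<in> carrier_mat (d \<xi>') (d \<xi>')"
      using rep_carrier \<xi> g by auto
    show ?thesis
      unfolding rep_mult[OF \<xi>(1) h g] rep_mult[OF \<xi>(2) h g] index_mult_mat_sum[OF Rh Rg a b]
        index_mult_mat_sum[OF Rh' Rg' c e] k_def
      by (simp add: sum_distrib_left sum_distrib_right mult_ac)
  qed
  have "(\<rho> \<xi> h * X * mat_adjoint (\<rho> \<xi>' h)) $$ (a, c) = (\<Sum>r<d \<xi>'. \<Sum>p<d \<xi>. \<integral>g. k r p g \<partial>M)"
    unfolding index_mult_mult_mat_adjoint[OF Rh Xc Rh' a c] k_def integral_mult_right_zero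
    by (intro sum.cong refl) (simp add: X_def coeff_inner_def mult_ac)
  also have "\<dots> = (\<Sum>r<d \<xi>'. \<integral>g. (\<Sum>p<d \<xi>. k r p g) \<partial>M)"
    by (intro sum.cong refl Bochner_Integration.integral_sum[symmetric] int) auto
  also have "\<dots> = (\<integral>g. (\<Sum>r<d \<xi>'. \<Sum>p<d \<xi>. k r p g) \<partial>M)"
    by (intro Bochner_Integration.integral_sum[symmetric]) (auto intro!: integrable_sum int)
  also have "\<dots> = (\<integral>g. \<rho> \<xi> (h \<otimes>\<^bsub>G\<^esub> g) $$ (a, b) * cnj (\<rho> \<xi>' (h \<otimes>\<^bsub>G\<^esub> g) $$ (c, e)) \<partial>M)"
    using hg by (intro Bochner_Integration.integral_cong) (auto simp: space_Haar)
  also have "\<dots> = coeff_inner \<xi> a b \<xi>' c e"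
    unfolding coeff_inner_def
    by (rule integral_left_transl[OF h, where f="\<lambda>g. \<rho> \<xi> g $$ (a, b) * cnj (\<rho> \<xi>' g $$ (c, e))"])
       (intro borel_measurable_times borel_measurable_cnj rep_entry_measurable \<xi> a b c e)
  finally show "(\<rho> \<xi> h * X * mat_adjoint (\<rho> \<xi>' h)) $$ (a, c) = X $$ (a, c)"
    unfolding X_def using a c by simp
qed

lemma invariant_mat_intertwines:
  assumes \<xi>: "\<xi> \<in> Ghat" "\<xi>' \<in> Ghat" and X: "X \<in> carrier_mat (d \<xi>) (d \<xi>')"
    and inv: "\<rho> \<xi> h * X * mat_adjoint (\<rho> \<xi>' h) = X" and h: "h \<in> carrier G"
  shows "\<rho> \<xi> h * X = X * \<rho> \<xi>' h"
    and "\<rho> \<xi>' h * mat_adjoint X = mat_adjoint X * \<rho> \<xi> h"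
proof -
  have Rh: "\<rho> \<xi> h \<in> carrier_mat (d \<xi>) (d \<xi>)" and Rh': "\<rho> \<xi>' h \<in> carrier_mat (d \<xi>') (d \<xi>')"
    using rep_carrier \<xi> h by auto
  have aRh: "mat_adjoint (\<rho> \<xi> h) \<in> carrier_mat (d \<xi>) (d \<xi>)"
    and aRh': "mat_adjoint (\<rho> \<xi>' h) \<in> carrier_mat (d \<xi>') (d \<xi>')"
    and aX: "mat_adjoint X \<in> carrier_mat (d \<xi>') (d \<xi>)"
    using mat_adjoint_carrier Rh Rh' X by auto
  have "\<rho> \<xi> h * X = \<rho> \<xi> h * X * (mat_adjoint (\<rho> \<xi>' h) * \<rho> \<xi>' h)"
    using rep_unitary[OF \<xi>(2) h] Rh X by simp
  also have "\<dots> = X * \<rho> \<xi>' h"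
    using assoc_mult_mat[OF mult_carrier_mat[OF Rh X] aRh' Rh'] inv by simp
  finally show "\<rho> \<xi> h * X = X * \<rho> \<xi>' h" .
  have "mat_adjoint X = mat_adjoint (\<rho> \<xi> h * X * mat_adjoint (\<rho> \<xi>' h))" using inv by simp
  also have "\<dots> = \<rho> \<xi>' h * mat_adjoint X * mat_adjoint (\<rho> \<xi> h)"
    using Rh X aRh' Rh' aX aRh
    by (simp add: mat_adjoint_mult[of _ "d \<xi>" "d \<xi>'" _ "d \<xi>'"] mat_adjoint_mult[of _ "d \<xi>" "d \<xi>" _ "d \<xi>'"]
        mat_adjoint_mat_adjoint[OF Rh'])
  finally have "mat_adjoint X = \<rho> \<xi>' h * mat_adjoint X * mat_adjoint (\<rho> \<xi> h)" .
  then have "\<rho> \<xi>' h * mat_adjoint X * (mat_adjoint (\<rho> \<xi> h) * \<rho> \<xi> h) = mat_adjoint X * \<rho> \<xi> h"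
    using assoc_mult_mat[OF mult_carrier_mat[OF Rh' aX] aRh Rh] by simp
  then show "\<rho> \<xi>' h * mat_adjoint X = mat_adjoint X * \<rho> \<xi> h"
    using rep_unitary[OF \<xi>(1) h] Rh' aX by simp
qed

lemma gram_intertwiner_scalar:
  assumes \<xi>: "\<xi> \<in> Ghat" "\<xi>' \<in> Ghat" and X: "X \<in> carrier_mat (d \<xi>) (d \<xi>')"
    and c1: "\<forall>h\<in>carrier G. \<rho> \<xi> h * X = X * \<rho> \<xi>' h"
    and c2: "\<forall>h\<in>carrier G. \<rho> \<xi>' h * mat_adjoint X = mat_adjoint X * \<rho> \<xi> h"
  shows "\<exists>c. mat_adjoint X * X = c \<cdot>\<^sub>m 1\<^sub>m (d \<xi>')"
proof (rule irreducible_commuting_mat_scalar[OF rep_irreducible[OF \<xi>(2)]])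
  show "\<forall>h\<in>carrier G. \<rho> \<xi>' h * (mat_adjoint X * X) = mat_adjoint X * X * \<rho> \<xi>' h"
  proof
    fix h assume h: "h \<in> carrier G"
    show "\<rho> \<xi>' h * (mat_adjoint X * X) = mat_adjoint X * X * \<rho> \<xi>' h"
      using c1 c2 h by (intro intertwiner_gram_commute[OF rep_carrier[OF \<xi>(1) h] rep_carrier[OF \<xi>(2) h] X]) auto
  qed
qed (use rep_carrier[OF \<xi>(2)] mat_adjoint_carrier[OF X] X in auto)

text \<open>By Schur's lemma \<open>X\<^sup>* X = c I\<close> and \<open>X X\<^sup>* = c' I\<close>; comparing an entry of \<open>X X\<^sup>* X\<close> and
  the traces gives \<open>c = c' \<noteq> 0\<close> and \<open>d\<^sub>\<xi> = d\<^sub>\<xi>\<^sub>'\<close>, so \<open>X\<^sup>-\<^sup>1 = X\<^sup>* / c\<close>.\<close>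
lemma intertwiner_rep_iso:
  assumes \<xi>: "\<xi> \<in> Ghat" "\<xi>' \<in> Ghat" and X: "X \<in> carrier_mat (d \<xi>) (d \<xi>')" and nz: "X \<noteq> 0\<^sub>m (d \<xi>) (d \<xi>')"
    and c1: "\<forall>h\<in>carrier G. \<rho> \<xi> h * X = X * \<rho> \<xi>' h"
    and c2: "\<forall>h\<in>carrier G. \<rho> \<xi>' h * mat_adjoint X = mat_adjoint X * \<rho> \<xi> h"
  shows "rep_iso G (d \<xi>') (\<rho> \<xi>') (d \<xi>) (\<rho> \<xi>)"
proof -
  have aX: "mat_adjoint X \<in> carrier_mat (d \<xi>') (d \<xi>)" by (rule mat_adjoint_carrier[OF X])
  define Y where "Y = mat_adjoint X * X"
  define Z where "Z = X * mat_adjoint X"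
  obtain c where Yc: "Y = c \<cdot>\<^sub>m 1\<^sub>m (d \<xi>')"
    using gram_intertwiner_scalar[OF \<xi> X c1 c2] unfolding Y_def by blast
  obtain c' where Zc': "Z = c' \<cdot>\<^sub>m 1\<^sub>m (d \<xi>)"
    using gram_intertwiner_scalar[OF \<xi>(2,1) aX c2, unfolded mat_adjoint_mat_adjoint[OF X], OF c1]
    unfolding Z_def by blast
  obtain a0 e0 where a0: "a0 < d \<xi>" and e0: "e0 < d \<xi>'" and nz0: "X $$ (a0, e0) \<noteq> 0"
    using nz X by (metis carrier_matD(1,2) eq_matI index_zero_mat(1,2,3))
  have "X * Y = Z * X" unfolding Y_def Z_def using X aX by simp
  moreover have "(X * Y) $$ (a0, e0) = c * X $$ (a0, e0)"
    unfolding Yc using X a0 e0 by (simp add: mult_smult_distrib[OF X])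
  moreover have "(Z * X) $$ (a0, e0) = c' * X $$ (a0, e0)"
    unfolding Zc' using X a0 e0 by (simp add: mult_smult_assoc_mat[of _ "d \<xi>" "d \<xi>"])
  ultimately have cc: "c' = c" using nz0 by simp
  have "(cmod (X $$ (a0, e0)))\<^sup>2 \<le> (\<Sum>a<d \<xi>. (cmod (X $$ (a, e0)))\<^sup>2)"
    using a0 by (intro member_le_sum) auto
  then have pos: "(\<Sum>a<d \<xi>. (cmod (X $$ (a, e0)))\<^sup>2) \<noteq> 0" using nz0 by auto
  have "c = Y $$ (e0, e0)" unfolding Yc using e0 by simp
  also have "\<dots> = complex_of_real (\<Sum>a<d \<xi>. (cmod (X $$ (a, e0)))\<^sup>2)"
    unfolding Y_def diag_mat_adjoint_mult[OF X e0] by simp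
  finally have c0: "c \<noteq> 0" using pos by (metis of_real_eq_0_iff)
  have "c * of_nat (d \<xi>') = (\<Sum>e<d \<xi>'. Y $$ (e, e))" unfolding Yc by simp
  also have "\<dots> = (\<Sum>e<d \<xi>'. \<Sum>a<d \<xi>. complex_of_real ((cmod (X $$ (a, e)))\<^sup>2))"
    unfolding Y_def by (intro sum.cong refl diag_mat_adjoint_mult[OF X]) auto
  also have "\<dots> = (\<Sum>a<d \<xi>. \<Sum>e<d \<xi>'. complex_of_real ((cmod (X $$ (a, e)))\<^sup>2))" by (rule sum.swap)
  also have "\<dots> = (\<Sum>a<d \<xi>. Z $$ (a, a))"
    unfolding Z_def by (intro sum.cong refl diag_mult_mat_adjoint[OF X, symmetric]) auto
  also have "\<dots> = c * of_nat (d \<xi>)" unfolding Zc' cc by simp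
  finally have dd: "d \<xi>' = d \<xi>" using c0 by simp
  define B where "B = (1 / c) \<cdot>\<^sub>m mat_adjoint X"
  have Bc: "B \<in> carrier_mat (d \<xi>') (d \<xi>)" unfolding B_def using aX by simp
  have "X * B = (1 / c) \<cdot>\<^sub>m Z" unfolding B_def Z_def using X aX by (simp add: mult_smult_distrib[OF X])
  then have XB: "X * B = 1\<^sub>m (d \<xi>)" unfolding Zc' cc using c0 by (auto intro!: eq_matI)
  have "B * X = (1 / c) \<cdot>\<^sub>m Y" unfolding B_def Y_def using X aX by (simp add: mult_smult_assoc_mat[OF aX X])
  then have BX: "B * X = 1\<^sub>m (d \<xi>')" unfolding Yc using c0 by (auto intro!: eq_matI)
  have "invertible_mat X"
    unfolding invertible_mat_def inverts_mat_def square_mat.simps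
    using X Bc XB BX dd by (intro conjI exI[of _ B]) auto
  then show ?thesis
    unfolding rep_iso_def using X dd c1 by (intro conjI bexI[of _ X]) auto
qed

lemma coeff_inner_orthogonality:
  assumes \<xi>: "\<xi> \<in> Ghat" "\<xi>' \<in> Ghat" and ab: "a < d \<xi>" "b < d \<xi>" and ce: "c < d \<xi>'" "e < d \<xi>'"
  shows "coeff_inner \<xi> a b \<xi>' c e = (if \<xi> = \<xi>' \<and> a = c \<and> b = e then 1 / of_nat (d \<xi>) else 0)"
proof -
  define X where "X = mat (d \<xi>) (d \<xi>') (\<lambda>(a, c). coeff_inner \<xi> a b \<xi>' c e)"
  have Xc: "X \<in> carrier_mat (d \<xi>) (d \<xi>')" unfolding X_def by simp
  have inv: "\<rho> \<xi> h * X * mat_adjoint (\<rho> \<xi>' h) = X" if "h \<in> carrier G" for h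
    unfolding X_def using coeff_inner_mat_invariant[OF \<xi> ab(2) ce(2) that] by simp
  note intertwines = invariant_mat_intertwines[OF \<xi> Xc inv]
  have Xac: "coeff_inner \<xi> a b \<xi>' c e = X $$ (a, c)" unfolding X_def using ab ce by simp
  show ?thesis
  proof (cases "\<xi> = \<xi>'")
    case False
    have "\<not> rep_iso G (d \<xi>') (\<rho> \<xi>') (d \<xi>) (\<rho> \<xi>)"
      using dual \<xi> False unfolding complete_dual_def by metis
    then have "X = 0\<^sub>m (d \<xi>) (d \<xi>')"
      using intertwiner_rep_iso[OF \<xi> Xc] intertwines by blast
    then show ?thesis using Xac ab ce False by simp
  next
    case True
    have e: "e < d \<xi>" using ce True by simp
    have "\<exists>k. X = k \<cdot>\<^sub>m 1\<^sub>m (d \<xi>)"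
      by (rule irreducible_commuting_mat_scalar[OF rep_irreducible[OF \<xi>(1)]])
         (use Xc intertwines(1) rep_carrier \<xi> True in auto)
    then obtain k where Xk: "X = k \<cdot>\<^sub>m 1\<^sub>m (d \<xi>)" by blast
    have "k * of_nat (d \<xi>) = (\<Sum>p<d \<xi>. X $$ (p, p))" unfolding Xk by simp
    also have "\<dots> = (\<Sum>p<d \<xi>. coeff_inner \<xi> p b \<xi> p e)"
      unfolding X_def True by simp
    also have "\<dots> = (\<integral>g. (\<Sum>p<d \<xi>. \<rho> \<xi> g $$ (p, b) * cnj (\<rho> \<xi> g $$ (p, e))) \<partial>M)"
      unfolding coeff_inner_def
      by (rule Bochner_Integration.integral_sum[symmetric], rule integrable_rep_entry_mult_cnj)
         (use \<xi> ab ce True in auto)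
    also have "\<dots> = (\<integral>g. (if e = b then 1 else 0) \<partial>M)"
      using rep_columns_orthonormal[OF \<xi>(1) _ e ab(2)]
      by (intro Bochner_Integration.integral_cong) (auto simp: space_Haar mult.commute)
    finally have k: "k = (if e = b then 1 else 0) / of_nat (d \<xi>)"
      using rep_dim_pos[OF \<xi>(1)] by (simp add: Haar.prob_space field_simps)
    show ?thesis unfolding Xac Xk using ab ce by (simp add: k True)
  qed
qed

end

section \<open>Finite Fourier sums and Bessel's inequality\<close>

lemma sum_sum_delta:
  assumes "a < (n::nat)" "b < n"
  shows "(\<Sum>a'<n. \<Sum>b'<n. if a' = a \<and> b' = b then f a' b' else 0) = (f a b :: complex)"
proof -
  have "(\<Sum>a'<n. \<Sum>b'<n. if a' = a \<and> b' = b then f a' b' else 0) = (\<Sum>a'<n. if a' = a then f a' b else 0)"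
    using assms(2) by (intro sum.cong refl) (auto simp: sum.delta)
  then show ?thesis using assms(1) by simp
qed

context compact_group_dual
begin

lemma fourier_carrier: "fourier M d \<rho> f \<xi> \<in> carrier_mat (d \<xi>) (d \<xi>)"
  unfolding fourier_def by auto

lemma index_fourier:
  assumes "\<xi> \<in> Ghat" "a < d \<xi>" "b < d \<xi>"
  shows "fourier M d \<rho> f \<xi> $$ (a, b) = (\<integral>g. f g * cnj (\<rho> \<xi> g $$ (b, a)) \<partial>M)"
  unfolding fourier_def using assms
  by (auto intro!: Bochner_Integration.integral_cong simp: index_mat_adjoint[OF rep_carrier] space_Haar)

definition fourier_sum :: "'x set \<Rightarrow> ('x \<Rightarrow> complex mat) \<Rightarrow> 'g \<Rightarrow> complex" where
  "fourier_sum F C g = (\<Sum>\<xi>\<in>F. of_nat (d \<xi>) * (\<Sum>a<d \<xi>. \<Sum>b<d \<xi>. C \<xi> $$ (a, b) * \<rho> \<xi> g $$ (b, a)))"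

lemma L2_fourier_sum: "finite F \<Longrightarrow> F \<subseteq> Ghat \<Longrightarrow> L2 M (fourier_sum F C)"
  unfolding fourier_sum_def by (intro L2_sum L2_cmult L2_rep_entry) auto

lemma integral_mult_cnj_fourier_sum:
  assumes f: "L2 M f" and F: "finite F" "F \<subseteq> Ghat"
  shows "(\<integral>g. f g * cnj (fourier_sum F C g) \<partial>M) =
    (\<Sum>\<xi>\<in>F. of_nat (d \<xi>) * (\<Sum>a<d \<xi>. \<Sum>b<d \<xi>. cnj (C \<xi> $$ (a, b)) * fourier M d \<rho> f \<xi> $$ (a, b)))"
proof -
  have "(\<integral>g. f g * cnj (fourier_sum F C g) \<partial>M) = (\<integral>g. (\<Sum>\<xi>\<in>F. \<Sum>a<d \<xi>. \<Sum>b<d \<xi>.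
      (of_nat (d \<xi>) * cnj (C \<xi> $$ (a, b))) * (f g * cnj (\<rho> \<xi> g $$ (b, a)))) \<partial>M)"
    unfolding fourier_sum_def
    by (intro Bochner_Integration.integral_cong refl) (simp add: sum_distrib_left mult_ac)
  also have "\<dots> = (\<Sum>\<xi>\<in>F. \<Sum>a<d \<xi>. \<Sum>b<d \<xi>. (of_nat (d \<xi>) * cnj (C \<xi> $$ (a, b))) *
      (\<integral>g. f g * cnj (\<rho> \<xi> g $$ (b, a)) \<partial>M))"
    using F by (intro integral_sum_triple L2_integrable_mult_cnj[OF f] L2_rep_entry) auto
  also have "\<dots> = (\<Sum>\<xi>\<in>F. of_nat (d \<xi>) * (\<Sum>a<d \<xi>. \<Sum>b<d \<xi>. cnj (C \<xi> $$ (a, b)) * fourier M d \<rho> f \<xi> $$ (a, b)))"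
    using F by (intro sum.cong refl) (auto simp: index_fourier sum_distrib_left mult_ac)
  finally show ?thesis .
qed

lemma fourier_fourier_sum:
  assumes F: "finite F" "F \<subseteq> Ghat" and \<xi>': "\<xi>' \<in> Ghat" and ab: "a < d \<xi>'" "b < d \<xi>'"
  shows "fourier M d \<rho> (fourier_sum F C) \<xi>' $$ (a, b) = (if \<xi>' \<in> F then C \<xi>' $$ (a, b) else 0)"
proof -
  have "fourier M d \<rho> (fourier_sum F C) \<xi>' $$ (a, b) = (\<integral>g. (\<Sum>\<xi>\<in>F. \<Sum>a'<d \<xi>. \<Sum>b'<d \<xi>.
      (of_nat (d \<xi>) * C \<xi> $$ (a', b')) * (\<rho> \<xi> g $$ (b', a') * cnj (\<rho> \<xi>' g $$ (b, a)))) \<partial>M)"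
    unfolding index_fourier[OF \<xi>' ab] fourier_sum_def
    by (intro Bochner_Integration.integral_cong refl) (simp add: sum_distrib_left sum_distrib_right mult_ac)
  also have "\<dots> = (\<Sum>\<xi>\<in>F. \<Sum>a'<d \<xi>. \<Sum>b'<d \<xi>. (of_nat (d \<xi>) * C \<xi> $$ (a', b')) * coeff_inner \<xi> b' a' \<xi>' b a)"
    unfolding coeff_inner_def
    by (rule integral_sum_triple) (use F \<xi>' ab in \<open>auto intro!: integrable_rep_entry_mult_cnj\<close>)
  also have "\<dots> = (\<Sum>\<xi>\<in>F. if \<xi> = \<xi>' then C \<xi>' $$ (a, b) else 0)"
  proof (rule sum.cong[OF refl])
    fix \<xi> assume "\<xi> \<in> F"
    then have \<xi>: "\<xi> \<in> Ghat" using F by auto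
    show "(\<Sum>a'<d \<xi>. \<Sum>b'<d \<xi>. (of_nat (d \<xi>) * C \<xi> $$ (a', b')) * coeff_inner \<xi> b' a' \<xi>' b a) =
      (if \<xi> = \<xi>' then C \<xi>' $$ (a, b) else 0)"
    proof (cases "\<xi> = \<xi>'")
      case True
      have "(\<Sum>a'<d \<xi>. \<Sum>b'<d \<xi>. (of_nat (d \<xi>) * C \<xi> $$ (a', b')) * coeff_inner \<xi> b' a' \<xi>' b a) =
        (\<Sum>a'<d \<xi>. \<Sum>b'<d \<xi>. if a' = a \<and> b' = b then (of_nat (d \<xi>) * C \<xi> $$ (a', b')) / of_nat (d \<xi>) else 0)"
        using True coeff_inner_orthogonality[OF \<xi> \<xi>'] ab by (intro sum.cong refl) auto
      also have "\<dots> = C \<xi>' $$ (a, b)"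
        using ab True rep_dim_pos[OF \<xi>] by (subst sum_sum_delta) auto
      finally show ?thesis using True by simp
    qed (use coeff_inner_orthogonality[OF \<xi> \<xi>'] ab in simp)
  qed
  also have "\<dots> = (if \<xi>' \<in> F then C \<xi>' $$ (a, b) else 0)" using F by (simp add: sum.delta')
  finally show ?thesis .
qed

lemma integral_fourier_sum_mult_cnj:
  assumes F: "finite F" "F \<subseteq> Ghat" and C: "\<And>\<xi>. \<xi> \<in> F \<Longrightarrow> C \<xi> \<in> carrier_mat (d \<xi>) (d \<xi>)"
  shows "(\<integral>g. fourier_sum F C g * cnj (fourier_sum F C g) \<partial>M) = complex_of_real (\<Sum>\<xi>\<in>F. real (d \<xi>) * frob2 (C \<xi>))"
proof -
  have "fourier M d \<rho> (fourier_sum F C) \<xi> $$ (a, b) = C \<xi> $$ (a, b)"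
    if "\<xi> \<in> F" "a < d \<xi>" "b < d \<xi>" for \<xi> a b
    using fourier_fourier_sum[OF F] that F by auto
  then have "(\<integral>g. fourier_sum F C g * cnj (fourier_sum F C g) \<partial>M) =
      (\<Sum>\<xi>\<in>F. of_nat (d \<xi>) * (\<Sum>a<d \<xi>. \<Sum>b<d \<xi>. cnj (C \<xi> $$ (a, b)) * C \<xi> $$ (a, b)))"
    unfolding integral_mult_cnj_fourier_sum[OF L2_fourier_sum[OF F] F]
    by (intro sum.cong refl arg_cong2[where f="(*)"]) auto
  then show ?thesis using C by (simp add: sum_cnj_mult_eq_frob2)
qed

lemma integral_norm_sq_fourier_sum:
  assumes F: "finite F" "F \<subseteq> Ghat" and C: "\<And>\<xi>. \<xi> \<in> F \<Longrightarrow> C \<xi> \<in> carrier_mat (d \<xi>) (d \<xi>)"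
  shows "(\<integral>g. (cmod (fourier_sum F C g))\<^sup>2 \<partial>M) = (\<Sum>\<xi>\<in>F. real (d \<xi>) * frob2 (C \<xi>))"
  using integral_fourier_sum_mult_cnj[OF F C] integral_mult_cnj_self[of M "fourier_sum F C"]
  by (metis of_real_eq_iff)

text \<open>Expand \<open>0 \<le> \<parallel>f - P\<parallel>\<^sup>2\<close> for the partial Fourier sum \<open>P\<close> of \<open>f\<close>: all three cross terms equal \<open>\<parallel>P\<parallel>\<^sup>2\<close>.\<close>
lemma bessel_inequality:
  assumes f: "L2 M f" and F: "finite F" "F \<subseteq> Ghat"
  shows "(\<Sum>\<xi>\<in>F. real (d \<xi>) * frob2 (fourier M d \<rho> f \<xi>)) \<le> (\<integral>g. (cmod (f g))\<^sup>2 \<partial>M)"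
proof -
  define C where "C = fourier M d \<rho> f"
  define P where "P = fourier_sum F C"
  define S where "S = (\<Sum>\<xi>\<in>F. real (d \<xi>) * frob2 (C \<xi>))"
  have P: "L2 M P" unfolding P_def by (rule L2_fourier_sum[OF F])
  have C: "C \<xi> \<in> carrier_mat (d \<xi>) (d \<xi>)" for \<xi> unfolding C_def by (rule fourier_carrier)
  have fP: "(\<integral>g. f g * cnj (P g) \<partial>M) = complex_of_real S"
    unfolding P_def S_def integral_mult_cnj_fourier_sum[OF f F]
    using C by (simp add: C_def sum_cnj_mult_eq_frob2)
  have Pf: "(\<integral>g. P g * cnj (f g) \<partial>M) = complex_of_real S"
    using Bochner_Integration.integral_cnj[of M "\<lambda>g. f g * cnj (P g)"] fP by (simp add: mult.commute)
  have PP: "(\<integral>g. P g * cnj (P g) \<partial>M) = complex_of_real S"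
    unfolding P_def S_def using integral_fourier_sum_mult_cnj[OF F] C by blast
  have "complex_of_real (\<integral>g. (cmod (f g - P g))\<^sup>2 \<partial>M) =
     (\<integral>g. (f g * cnj (f g) - f g * cnj (P g)) - (P g * cnj (f g) - P g * cnj (P g)) \<partial>M)"
    unfolding integral_mult_cnj_self[symmetric]
    by (intro Bochner_Integration.integral_cong refl) (simp add: algebra_simps)
  also have "\<dots> = complex_of_real ((\<integral>g. (cmod (f g))\<^sup>2 \<partial>M) - S)"
    using L2_integrable_mult_cnj[OF f f] L2_integrable_mult_cnj[OF f P] L2_integrable_mult_cnj[OF P f]
      L2_integrable_mult_cnj[OF P P] fP Pf PP integral_mult_cnj_self[of M f]
    by simp
  finally have "(\<integral>g. (cmod (f g - P g))\<^sup>2 \<partial>M) = (\<integral>g. (cmod (f g))\<^sup>2 \<partial>M) - S"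
    using of_real_eq_iff by blast
  moreover have "(\<integral>g. (cmod (f g - P g))\<^sup>2 \<partial>M) \<ge> 0" by simp
  ultimately show ?thesis unfolding S_def C_def by simp
qed

lemma countable_fourier_support:
  assumes f: "L2 M f"
  shows "countable {\<xi>\<in>Ghat. fourier M d \<rho> f \<xi> \<noteq> 0\<^sub>m (d \<xi>) (d \<xi>)}"
proof -
  define w where "w \<xi> = real (d \<xi>) * frob2 (fourier M d \<rho> f \<xi>)" for \<xi>
  have w_nonneg: "w \<xi> \<ge> 0" for \<xi> unfolding w_def using frob2_nonneg by auto
  have "w summable_on Ghat"
    using bessel_inequality[OF f] w_nonneg unfolding w_def[symmetric]
    by (intro nonneg_bdd_above_summable_on bdd_aboveI[where M="\<integral>g. (cmod (f g))\<^sup>2 \<partial>M"]) auto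
  then have "countable {\<xi>\<in>Ghat. w \<xi> \<noteq> 0}"
    using w_nonneg by (intro abs_summable_countable) simp
  moreover have "w \<xi> = 0 \<longleftrightarrow> fourier M d \<rho> f \<xi> = 0\<^sub>m (d \<xi>) (d \<xi>)" if "\<xi> \<in> Ghat" for \<xi>
    using rep_dim_pos[OF that] frob2_eq_0_iff[OF fourier_carrier] unfolding w_def by simp
  then have "{\<xi>\<in>Ghat. w \<xi> \<noteq> 0} = {\<xi>\<in>Ghat. fourier M d \<rho> f \<xi> \<noteq> 0\<^sub>m (d \<xi>) (d \<xi>)}"
    by blast
  ultimately show ?thesis by simp
qed

section \<open>Projection onto \<open>L\<^sup>2(\<hat>H)\<close>\<close>

lemma fourier_entry_dist_le:
  assumes \<psi>: "L2 M \<psi>" and P: "L2 M P" and \<xi>: "\<xi> \<in> Ghat" and ab: "a < d \<xi>" "b < d \<xi>"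
    and t: "t > 0" and close: "(\<integral>g. (cmod (\<psi> g - P g))\<^sup>2 \<partial>M) \<le> t\<^sup>2"
  shows "cmod (fourier M d \<rho> \<psi> \<xi> $$ (a, b) - fourier M d \<rho> P \<xi> $$ (a, b)) \<le> t"
proof -
  have u: "L2 M (\<lambda>g. \<psi> g - P g)" by (rule L2_diff[OF \<psi> P])
  have r: "L2 M (\<lambda>g. \<rho> \<xi> g $$ (b, a))" by (rule L2_rep_entry[OF \<xi> ab(2,1)])
  have "fourier M d \<rho> \<psi> \<xi> $$ (a, b) - fourier M d \<rho> P \<xi> $$ (a, b) =
      (\<integral>g. (\<psi> g - P g) * cnj (\<rho> \<xi> g $$ (b, a)) \<partial>M)"
    unfolding index_fourier[OF \<xi> ab]
    using L2_integrable_mult_cnj[OF \<psi> r] L2_integrable_mult_cnj[OF P r] by (simp add: left_diff_distrib)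
  also have "cmod \<dots> \<le> (\<integral>g. cmod ((\<psi> g - P g) * cnj (\<rho> \<xi> g $$ (b, a))) \<partial>M)"
    by (rule Bochner_Integration.integral_norm_bound)
  also have "\<dots> \<le> (\<integral>g. cmod (\<psi> g - P g) \<partial>M)"
  proof (rule integral_mono)
    show "integrable M (\<lambda>g. cmod ((\<psi> g - P g) * cnj (\<rho> \<xi> g $$ (b, a))))"
      using L2_integrable_mult_cnj[OF u r] by auto
    show "integrable M (\<lambda>g. cmod (\<psi> g - P g))" by (rule Haar.L1_le_L2_bound(1)[OF u t close])
    fix g assume "g \<in> space M"
    then have "cmod (\<rho> \<xi> g $$ (b, a)) \<le> 1" using rep_entry_norm_le_1[OF \<xi> _ ab(2,1)] space_Haar by auto
    then show "cmod ((\<psi> g - P g) * cnj (\<rho> \<xi> g $$ (b, a))) \<le> cmod (\<psi> g - P g)"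
      by (simp add: norm_mult mult_left_le)
  qed
  also have "\<dots> \<le> t" by (rule Haar.L1_le_L2_bound(2)[OF u t close])
  finally show ?thesis .
qed

lemma fourier_entry_L2_limit:
  assumes \<psi>: "L2 M \<psi>" and P: "\<And>m. L2 M (P m)" and e: "e \<longlonglongrightarrow> 0"
    and close: "\<And>m. (\<integral>g. (cmod (\<psi> g - P m g))\<^sup>2 \<partial>M) \<le> e m"
    and \<xi>: "\<xi> \<in> Ghat" and ab: "a < d \<xi>" "b < d \<xi>"
    and eventually: "\<And>m. m \<ge> m0 \<Longrightarrow> fourier M d \<rho> (P m) \<xi> $$ (a, b) = v"
  shows "fourier M d \<rho> \<psi> \<xi> $$ (a, b) = v"
proof -
  have "cmod (fourier M d \<rho> \<psi> \<xi> $$ (a, b) - v) \<le> \<epsilon>" if \<epsilon>: "\<epsilon> > 0" for \<epsilon>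
  proof -
    obtain m1 where m1: "\<And>m. m \<ge> m1 \<Longrightarrow> e m < \<epsilon>\<^sup>2"
      using order_tendstoD(2)[OF e, of "\<epsilon>\<^sup>2"] \<epsilon> unfolding eventually_sequentially by auto
    define m where "m = max m0 m1"
    have "(\<integral>g. (cmod (\<psi> g - P m g))\<^sup>2 \<partial>M) \<le> \<epsilon>\<^sup>2"
      using close[of m] m1[of m] unfolding m_def by fastforce
    then show ?thesis
      using fourier_entry_dist_le[OF \<psi> P[of m] \<xi> ab \<epsilon>] eventually[of m] unfolding m_def by simp
  qed
  then show ?thesis
    by (metis dense_ge norm_ge_zero order.antisym right_minus_eq norm_le_zero_iff)
qed

text \<open>By orthogonality, the squared \<open>L\<^sup>2\<close>-distance of two partial Fourier sums is a
  \<open>d\<^sub>\<xi>\<close>-weighted tail of the Bessel series, which converges.\<close>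
lemma L2_limit_fourier_sums:
  assumes \<phi>: "L2 M \<phi>" and F: "\<And>N. finite (F N)" "\<And>N. F N \<subseteq> Ghat"
    and F_mono: "\<And>m N. m \<le> N \<Longrightarrow> F m \<subseteq> F N"
  shows "\<exists>\<psi> e. L2 M \<psi> \<and> e \<longlonglongrightarrow> 0 \<and>
    (\<forall>m. (\<integral>g. (cmod (\<psi> g - fourier_sum (F m) (fourier M d \<rho> \<phi>) g))\<^sup>2 \<partial>M) \<le> e m)"
proof -
  define C where "C = fourier M d \<rho> \<phi>"
  have C: "C \<xi> \<in> carrier_mat (d \<xi>) (d \<xi>)" for \<xi> unfolding C_def by (rule fourier_carrier)
  define w where "w \<xi> = real (d \<xi>) * frob2 (C \<xi>)" for \<xi>
  have w_nonneg: "w \<xi> \<ge> 0" for \<xi> unfolding w_def using frob2_nonneg by auto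
  define P where "P N = fourier_sum (F N) C" for N
  have P: "L2 M (P N)" for N unfolding P_def by (rule L2_fourier_sum[OF F])
  define s where "s N = sum w (F N)" for N
  have "incseq s" unfolding incseq_def s_def
    by (intro allI impI sum_mono2 F F_mono w_nonneg)
  moreover have "\<forall>N. s N \<le> (\<integral>g. (cmod (\<phi> g))\<^sup>2 \<partial>M)"
    unfolding s_def w_def C_def using bessel_inequality[OF \<phi> F] by auto
  ultimately obtain L where sL: "s \<longlonglongrightarrow> L" and s_le: "\<forall>N. s N \<le> L"
    using incseq_convergent by blast
  define e where "e m = L - s m" for m
  have e: "e \<longlonglongrightarrow> 0" unfolding e_def using tendsto_diff[OF tendsto_const[of L] sL] by simp
  have "(\<integral>g. (cmod (P N g - P m g))\<^sup>2 \<partial>M) \<le> e m" if "m \<le> N" for m N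
  proof -
    have "P N g - P m g = fourier_sum (F N - F m) C g" for g
      unfolding P_def fourier_sum_def using F_mono[OF that] F by (simp add: sum_diff)
    moreover have "finite (F N - F m)" "F N - F m \<subseteq> Ghat" using F by auto
    ultimately have "(\<integral>g. (cmod (P N g - P m g))\<^sup>2 \<partial>M) = sum w (F N - F m)"
      unfolding w_def using integral_norm_sq_fourier_sum C by simp
    also have "\<dots> = s N - s m" unfolding s_def using F_mono[OF that] F by (simp add: sum_diff)
    finally show ?thesis unfolding e_def using s_le[rule_format, of N] by linarith
  qed
  then have "\<exists>\<psi>. L2 M \<psi> \<and> (\<forall>m. (\<integral>g. (cmod (\<psi> g - P m g))\<^sup>2 \<partial>M) \<le> e m)"
    by (rule Haar.L2_Cauchy_limit[OF P e])
  then show ?thesis using e unfolding P_def C_def by blast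
qed

text \<open>The orthogonal projection of \<open>\<phi>\<close> onto \<open>L\<^sup>2(\<hat>H)\<close> is the limit of the partial Fourier sums
  over an exhaustion of the countable set of \<open>\<xi> \<in> \<hat>H\<close> with \<open>\<hat>\<phi>\<^sub>\<xi> \<noteq> 0\<close>.\<close>
lemma fourier_projection_exists:
  assumes \<phi>: "L2 M \<phi>" and H: "H \<subseteq> Ghat"
  shows "\<exists>\<psi>. L2 M \<psi> \<and> (\<forall>\<xi>\<in>Ghat. fourier M d \<rho> \<psi> \<xi> =
            (if \<xi> \<in> H then fourier M d \<rho> \<phi> \<xi> else 0\<^sub>m (d \<xi>) (d \<xi>)))"
proof -
  define C where "C = fourier M d \<rho> \<phi>"
  have C: "C \<xi> \<in> carrier_mat (d \<xi>) (d \<xi>)" for \<xi> unfolding C_def by (rule fourier_carrier)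
  define S where "S = {\<xi>\<in>H. C \<xi> \<noteq> 0\<^sub>m (d \<xi>) (d \<xi>)}"
  have "countable S"
    by (rule countable_subset[OF _ countable_fourier_support[OF \<phi>]]) (use H in \<open>auto simp: S_def C_def\<close>)
  define F where "F N = S \<inter> from_nat_into S ` {..<N}" for N
  have F: "finite (F N)" "F N \<subseteq> Ghat" for N unfolding F_def S_def using H by auto
  have F_mono: "m \<le> N \<Longrightarrow> F m \<subseteq> F N" for m N unfolding F_def by auto
  have F_exhausts: "\<exists>m. \<xi> \<in> F m" if \<xi>: "\<xi> \<in> S" for \<xi>
  proof -
    have "\<xi> \<in> range (from_nat_into S)"
      using range_from_nat_into[OF _ \<open>countable S\<close>] \<xi> by auto
    then obtain n where "\<xi> = from_nat_into S n" by auto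
    then show ?thesis unfolding F_def using \<xi> by (intro exI[of _ "Suc n"]) auto
  qed
  obtain \<psi> e where \<psi>: "L2 M \<psi>" and e: "e \<longlonglongrightarrow> 0"
    and close: "\<And>m. (\<integral>g. (cmod (\<psi> g - fourier_sum (F m) C g))\<^sup>2 \<partial>M) \<le> e m"
    using L2_limit_fourier_sums[of \<phi> F, OF \<phi> F F_mono, folded C_def] by blast
  note limit = fourier_entry_L2_limit[OF \<psi> L2_fourier_sum[OF F] e close]
  have "fourier M d \<rho> \<psi> \<xi> = (if \<xi> \<in> H then C \<xi> else 0\<^sub>m (d \<xi>) (d \<xi>))" if \<xi>: "\<xi> \<in> Ghat" for \<xi>
  proof (rule eq_matI)
    fix a b assume "a < dim_row (if \<xi> \<in> H then C \<xi> else 0\<^sub>m (d \<xi>) (d \<xi>))"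
      "b < dim_col (if \<xi> \<in> H then C \<xi> else 0\<^sub>m (d \<xi>) (d \<xi>))"
    then have ab: "a < d \<xi>" "b < d \<xi>" using C[of \<xi>] by (auto split: if_splits)
    note partial_entry = fourier_fourier_sum[OF F \<xi> ab, of _ C]
    show "fourier M d \<rho> \<psi> \<xi> $$ (a, b) = (if \<xi> \<in> H then C \<xi> else 0\<^sub>m (d \<xi>) (d \<xi>)) $$ (a, b)"
    proof (cases "\<xi> \<in> S")
      case True
      then obtain m0 where "\<xi> \<in> F m0" using F_exhausts by blast
      then have "fourier M d \<rho> \<psi> \<xi> $$ (a, b) = C \<xi> $$ (a, b)"
        using partial_entry F_mono by (intro limit[OF \<xi> ab, of m0]) auto
      then show ?thesis using True ab unfolding S_def by auto
    next
      case False
      then have "fourier M d \<rho> \<psi> \<xi> $$ (a, b) = 0"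
        using partial_entry by (intro limit[OF \<xi> ab, of 0]) (auto simp: F_def)
      then show ?thesis using False ab unfolding S_def by auto
    qed
  qed (use fourier_carrier[of \<psi> \<xi>] C[of \<xi>] in auto)
  then show ?thesis using \<psi> unfolding C_def by blast
qed

end

section \<open>Monotonicity of the objective\<close>

lemma nn_integral_count_space_subset_mono:
  assumes "H \<subseteq> K" and "\<And>x. x \<in> H \<Longrightarrow> f x \<le> g x"
  shows "(\<integral>\<^sup>+x. f x \<partial>count_space H) \<le> (\<integral>\<^sup>+x. g x \<partial>count_space K)"
proof -
  have "(\<integral>\<^sup>+x. f x \<partial>count_space H) = (\<integral>\<^sup>+x. f x * indicator H x \<partial>count_space UNIV)"
    by (rule nn_integral_count_space_indicator) (simp add: NO_MATCH_def)
  also have "\<dots> \<le> (\<integral>\<^sup>+x. g x * indicator K x \<partial>count_space UNIV)"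
    using assms by (intro nn_integral_mono) (auto split: split_indicator)
  also have "\<dots> = (\<integral>\<^sup>+x. g x \<partial>count_space K)"
    by (rule nn_integral_count_space_indicator[symmetric]) (simp add: NO_MATCH_def)
  finally show ?thesis .
qed

lemma plus_norm_le_plus_norm_superset:
  "H \<subseteq> K \<Longrightarrow> plus_norm G Ghat d \<rho> H t \<le> plus_norm G Ghat d \<rho> K t"
  unfolding plus_norm_def by (intro INF_superset_mono) auto

text \<open>The objective over \<open>H\<close> only involves Fourier coefficients indexed by \<open>H\<close>.\<close>
lemma objective_le_objective_superset:
  assumes HK: "H \<subseteq> K"
    and \<psi>: "\<And>j \<xi>. j < q \<Longrightarrow> \<xi> \<in> H \<Longrightarrow> fourier M d \<rho> (\<psi> j) \<xi> = fourier M d \<rho> (\<phi> j) \<xi>"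
  shows "objective G M Ghat d \<rho> H n q y lam mu \<psi> l \<le> objective G M Ghat d \<rho> K n q y lam mu \<phi> l"
proof -
  have residual_le: "(\<integral>\<^sup>+\<xi>. ennreal ((real (d \<xi>))\<^sup>2 / 2 * frob2 (residual M d \<rho> q (y i) \<psi> (l i) \<xi>)) \<partial>count_space H)
      \<le> (\<integral>\<^sup>+\<xi>. ennreal ((real (d \<xi>))\<^sup>2 / 2 * frob2 (residual M d \<rho> q (y i) \<phi> (l i) \<xi>)) \<partial>count_space K)"
    for i
  proof (rule nn_integral_count_space_subset_mono[OF HK])
    fix \<xi> assume "\<xi> \<in> H"
    then have "residual M d \<rho> q (y i) \<psi> (l i) \<xi> = residual M d \<rho> q (y i) \<phi> (l i) \<xi>"
      unfolding residual_def using \<psi> by (intro eq_matI) auto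
    then show "ennreal ((real (d \<xi>))\<^sup>2 / 2 * frob2 (residual M d \<rho> q (y i) \<psi> (l i) \<xi>))
        \<le> ennreal ((real (d \<xi>))\<^sup>2 / 2 * frob2 (residual M d \<rho> q (y i) \<phi> (l i) \<xi>))" by simp
  qed
  have plus_norm_le: "ennreal lam * (\<Sum>j<q. plus_norm G Ghat d \<rho> H (l i j))
      \<le> ennreal lam * (\<Sum>j<q. plus_norm G Ghat d \<rho> K (l i j))" for i
    by (intro mult_left_mono sum_mono plus_norm_le_plus_norm_superset[OF HK]) simp
  have coefficient_le: "ennreal (mu j) * (\<integral>\<^sup>+\<xi>. ennreal ((real (d \<xi>))\<^sup>2 * frob2 (fourier M d \<rho> (\<psi> j) \<xi>)) \<partial>count_space H)
      \<le> ennreal (mu j) * (\<integral>\<^sup>+\<xi>. ennreal ((real (d \<xi>))\<^sup>2 * frob2 (fourier M d \<rho> (\<phi> j) \<xi>)) \<partial>count_space K)"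
    if "j \<in> {..<q}" for j
    using that by (intro mult_left_mono nn_integral_count_space_subset_mono[OF HK]) (simp_all add: \<psi>)
  show ?thesis
    unfolding objective_def
    by (rule add_mono[OF sum_mono[OF add_mono[OF residual_le plus_norm_le]] sum_mono[OF coefficient_le]])
qed

lemma (in compact_group_dual) feasible_point_restrict:
  assumes H: "H \<subseteq> Ghat" and \<phi>: "\<forall>j<q. L2_hat M Ghat d \<rho> Ghat (\<phi> j)"
    and l: "\<forall>i<n. \<forall>j<q. block_op d Ghat (l i j)"
  shows "\<exists>\<psi>. (\<forall>j<q. L2_hat M Ghat d \<rho> H (\<psi> j)) \<and> (\<forall>i<n. \<forall>j<q. block_op d H (l i j)) \<and>
    objective G M Ghat d \<rho> H n q y lam mu \<psi> l \<le> objective G M Ghat d \<rho> Ghat n q y lam mu \<phi> l"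
proof -
  have "\<forall>j. \<exists>\<psi>\<^sub>j. j < q \<longrightarrow> L2 M \<psi>\<^sub>j \<and> (\<forall>\<xi>\<in>Ghat. fourier M d \<rho> \<psi>\<^sub>j \<xi> =
      (if \<xi> \<in> H then fourier M d \<rho> (\<phi> j) \<xi> else 0\<^sub>m (d \<xi>) (d \<xi>)))"
    using fourier_projection_exists[OF _ H] \<phi> unfolding L2_hat_def by blast
  from choice[OF this] obtain \<psi> where \<psi>: "\<forall>j<q. L2 M (\<psi> j) \<and> (\<forall>\<xi>\<in>Ghat. fourier M d \<rho> (\<psi> j) \<xi> =
      (if \<xi> \<in> H then fourier M d \<rho> (\<phi> j) \<xi> else 0\<^sub>m (d \<xi>) (d \<xi>)))"
    by blast
  have "\<forall>j<q. L2_hat M Ghat d \<rho> H (\<psi> j)" using \<psi> unfolding L2_hat_def by auto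
  moreover have "\<forall>i<n. \<forall>j<q. block_op d H (l i j)" using l H unfolding block_op_def by blast
  moreover have "objective G M Ghat d \<rho> H n q y lam mu \<psi> l \<le> objective G M Ghat d \<rho> Ghat n q y lam mu \<phi> l"
    using \<psi> H by (intro objective_le_objective_superset) auto
  ultimately show ?thesis by blast
qed

theorem proposition5:
  fixes G :: "'g monoid" and T :: "'g topology" and M :: "'g measure"
    and Ghat H :: "'x set" and d :: "'x \<Rightarrow> nat" and \<rho> :: "'x \<Rightarrow> 'g \<Rightarrow> complex mat"
    and n q :: nat and y :: "nat \<Rightarrow> 'g \<Rightarrow> real" and lam :: real and mu :: "nat \<Rightarrow> real"
  assumes "compact_Hausdorff_group G T"
    and "normalized_Haar G T M"
    and "complete_dual G T Ghat d \<rho>"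
    and "\<forall>i<n. L2 M (\<lambda>g. complex_of_real (y i g))"
    and "q \<ge> 1"
    and "lam \<ge> 0"
    and "\<forall>j<q. mu j \<ge> 0"
    and "H \<subseteq> Ghat"
  shows "OPT G M Ghat d \<rho> H n q y lam mu \<le> OPT G M Ghat d \<rho> Ghat n q y lam mu"
proof -
  have "group G" and "topspace T = carrier G"
    using assms(1) unfolding compact_Hausdorff_group_def by auto
  then interpret compact_group_dual G T M Ghat d \<rho>
    by (intro compact_group_dual.intro compact_group_dual_axioms.intro assms(2,3))
  show ?thesis
    unfolding OPT_def
  proof (rule INF_mono)
    fix p assume "p \<in> {(\<phi>, l). (\<forall>j<q. L2_hat M Ghat d \<rho> Ghat (\<phi> j)) \<and> (\<forall>i<n. \<forall>j<q. block_op d Ghat (l i j))}"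
    then obtain \<phi> l where p: "p = (\<phi>, l)" and \<phi>: "\<forall>j<q. L2_hat M Ghat d \<rho> Ghat (\<phi> j)"
      and l: "\<forall>i<n. \<forall>j<q. block_op d Ghat (l i j)" by blast
    obtain \<psi> where "(\<forall>j<q. L2_hat M Ghat d \<rho> H (\<psi> j)) \<and> (\<forall>i<n. \<forall>j<q. block_op d H (l i j))"
      and "objective G M Ghat d \<rho> H n q y lam mu \<psi> l \<le> objective G M Ghat d \<rho> Ghat n q y lam mu \<phi> l"
      using feasible_point_restrict[OF assms(8) \<phi> l] by blast
    then show "\<exists>p'\<in>{(\<phi>, l). (\<forall>j<q. L2_hat M Ghat d \<rho> H (\<phi> j)) \<and> (\<forall>i<n. \<forall>j<q. block_op d H (l i j))}.
        (case p' of (\<phi>, l) \<Rightarrow> objective G M Ghat d \<rho> H n q y lam mu \<phi> l) \<le>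
        (case p of (\<phi>, l) \<Rightarrow> objective G M Ghat d \<rho> Ghat n q y lam mu \<phi> l)"
      unfolding p by (intro bexI[of _ "(\<psi>, l)"]) auto
  qed
qed

end
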